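(* Let $S$ be a poset-type and let $S'\subseteq L(S)$. Then $\tau(\overline{S'})=\overline{\tau(S')}$, and this set is a poset-type.
   Context: Words: $\Sigma=\{\mathrm L,\mathrm X,\mathrm R\}$ ordered $\mathrm L<_{\mathrm{lex}}\mathrm X<_{\mathrm{lex}}\mathrm R$; $\Sigma^*$ is the set of finite words over $\Sigma$ (characters indexed from $0$), $\le_{\mathrm{lex}}$ the lexicographic order, $|w|$ the length. For $w,w'\in\Sigma^*$: $w\prec w'$ iff there is $i<\min(|w|,|w'|)$ with $(w_i,w'_i)=(\mathrm L,\mathrm R)$ and $w_j\le_{\mathrm{lex}}w'_j$ for all $j<i$; $w\preceq w'$ iff $w\prec w'$ or $w=w'$. $w\perp w'$ iff there are $i,j<\min(|w|,|w'|)$ with $w_i<_{\mathrm{lex}}w'_i$ and $w'_j<_{\mathrm{lex}}w_j$. Words $w,w'$ are related if $w\preceq w'$, $w'\preceq w$ or $w\perp w'$; otherwise unrelated. Words $u\le_{\mathrm{lex}}v$ are compatible if there is no $i<\min(|u|,|v|)$ with $(u_i,v_i)=(\mathrm R,\mathrm L)$, and, if there exists $j<\min(|u|,|v|)$ with $(u_j,v_j)=(\mathrm L,\mathrm R)$, then $u\prec v$ and $u\not\perp v$. $w|_i$ is the initial segment of length $i$; for $S\subseteq\Sigma^*$, $\overline S=\{w|_i: w\in S,0\le i\le|w|\}$; $S_i=\{w\in S:|w|=i\}$; $L(S)$ is the set of leaves of $S$ (words in $S$ with no proper extension in $S$); $w^\frown c$ is $w$ with $c$ appended, $S^\frown c=\{w^\frown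 c:w\in S\}$. Poset-type: $S\subseteq\Sigma^*$ with $S=\overline S$ such that for every $i$ with $0\le i<\max_{w\in S}|w|$ exactly one of the following holds: 1. (Leaf) there is $w\in S_i$ related to every $u\in S_i\setminus\{w\}$ and $S_{i+1}=(S_i\setminus\{w\})^\frown\mathrm X$. 2. (Branching) there is $w\in S_i$ with $S_{i+1}=\{z\in S_i:z<_{\mathrm{lex}}w\}^\frown\mathrm X\cup\{w^\frown\mathrm X,w^\frown\mathrm R\}\cup\{z\in S_i:w<_{\mathrm{lex}}z\}^\frown\mathrm R$. 3. (New $\perp$) there are unrelated $v<_{\mathrm{lex}}w$ in $S_i$ with $S_{i+1}=\{z\in S_i:z<_{\mathrm{lex}}v\}^\frown\mathrm X\cup\{v^\frown\mathrm R\}\cup\{z\in S_i:v<_{\mathrm{lex}}z<_{\mathrm{lex}}w,\ z\perp v\}^\frown\mathrm X\cup\{z\in S_i:v<_{\mathrm{lex}}z<_{\mathrm{lex}}w,\ z\not\perp v\}^\frown\mathrm R\cup\{w^\frown\mathrm X\}\cup\{z\in S_i:w<_{\mathrm{lex}}z\}^\frown\mathrm R$, and (A) for every $u\in S_i$ with $v<_{\mathrm{lex}}u<_{\mathrm{lex}}w$, $u\perp v$ or $u\perp w$. 4. (New $\preceq$) there are unrelated $v<_{\mathrm{lex}}w$ in $S_i$ with $S_{i+1}=\{z\in S_i:z<_{\mathrm{lex}}v,\ z\perp v\}^\frown\mathrm X\cup\{z\in S_i:z<_{\mathrm{lex}}v,\ z\not\perp v\}^\frown\mathrm L\cup\{v^\frown\mathrm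 L\}\cup\{z\in S_i:v<_{\mathrm{lex}}z<_{\mathrm{lex}}w\}^\frown\mathrm X\cup\{w^\frown\mathrm R\}\cup\{z\in S_i:w<_{\mathrm{lex}}z,\ w\perp z\}^\frown\mathrm X\cup\{z\in S_i:w<_{\mathrm{lex}}z,\ w\not\perp z\}^\frown\mathrm R$, and (B1) for every $u\in S_i$ with $u<_{\mathrm{lex}}v$, $u\preceq w$ or $u\perp v$; (B2) for every $u\in S_i$ with $w<_{\mathrm{lex}}u$, $v\preceq u$ or $w\perp u$. Embedding type: for $S\subseteq\Sigma^*$, a level $i$ of $\overline S$ is interesting if the structure $(\overline S_i,\le_{\mathrm{lex}},\preceq,\perp)$ is not isomorphic to $(\overline S_{i+1},\le_{\mathrm{lex}},\preceq,\perp)$, or there exist incompatible $u,v\in\overline S_{i+1}$ such that $u|_i$ and $v|_i$ are compatible. $I(S)$ is the set of interesting levels. $\tau_S\colon\overline S\to\Sigma^*$ maps a word $w$ to the word obtained from $w$ by deleting all characters whose indices are not in $I(S)$, and $\tau(S)=\tau_S[S]$. *)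

theory Defs
  imports Main
begin

datatype letter = L | X | R

fun rank :: "letter \<Rightarrow> nat" where
  "rank L = 0" | "rank X = 1" | "rank R = 2"

definition let_less :: "letter \<Rightarrow> letter \<Rightarrow> bool" where
  "let_less a b \<longleftrightarrow> rank a < rank b"

definition let_le :: "letter \<Rightarrow> letter \<Rightarrow> bool" where
  "let_le a b \<longleftrightarrow> rank a \<le> rank b"

type_synonym word = "letter list"

definition lex_le :: "word \<Rightarrow> word \<Rightarrow> bool" where
  "lex_le u v \<longleftrightarrow> (\<exists>k. v = u @ k) \<or>
     (\<exists>i. i < length u \<and> i < length v \<and> take i u = take i v \<and> let_less (u ! i) (v ! i))"

definition lex_less :: "word \<Rightarrow> word \<Rightarrow> bool" where
  "lex_less u v \<longleftrightarrow> lex_le u v \<and> u \<noteq> v"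

definition prec :: "word \<Rightarrow> word \<Rightarrow> bool" where
  "prec w w' \<longleftrightarrow> (\<exists>i. i < length w \<and> i < length w' \<and> w ! i = L \<and> w' ! i = R \<and>
       (\<forall>j<i. let_le (w ! j) (w' ! j)))"

definition preceq :: "word \<Rightarrow> word \<Rightarrow> bool" where
  "preceq w w' \<longleftrightarrow> prec w w' \<or> w = w'"

definition perp :: "word \<Rightarrow> word \<Rightarrow> bool" where
  "perp w w' \<longleftrightarrow> (\<exists>i j. i < length w \<and> i < length w' \<and> j < length w \<and> j < length w' \<and>
       let_less (w ! i) (w' ! i) \<and> let_less (w' ! j) (w ! j))"

definition related :: "word \<Rightarrow> word \<Rightarrow> bool" where
  "related w w' \<longleftrightarrow> preceq w w' \<or> preceq w' w \<or> perp w w'"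

definition unrelated :: "word \<Rightarrow> word \<Rightarrow> bool" where
  "unrelated w w' \<longleftrightarrow> \<not> related w w'"

text \<open>Compatibility of u and v, assuming u is lex-below v.\<close>
definition compat_ord :: "word \<Rightarrow> word \<Rightarrow> bool" where
  "compat_ord u v \<longleftrightarrow>
     \<not> (\<exists>i. i < length u \<and> i < length v \<and> u ! i = R \<and> v ! i = L) \<and>
     ((\<exists>j. j < length u \<and> j < length v \<and> u ! j = L \<and> v ! j = R) \<longrightarrow> prec u v \<and> \<not> perp u v)"

definition compatible :: "word \<Rightarrow> word \<Rightarrow> bool" where
  "compatible u v \<longleftrightarrow> (if lex_le u v then compat_ord u v else compat_ord v u)"

definition closure :: "word set \<Rightarrow> word set" where
  "closure S = {take i w | w i. w \<in> S \<and> i \<le> length w}"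

definition level :: "word set \<Rightarrow> nat \<Rightarrow> word set" where
  "level S i = {w \<in> S. length w = i}"

definition leaves :: "word set \<Rightarrow> word set" where
  "leaves S = {w \<in> S. \<not> (\<exists>w'\<in>S. \<exists>k. k \<noteq> [] \<and> w' = w @ k)}"

definition app :: "word set \<Rightarrow> letter \<Rightarrow> word set" where
  "app S c = (\<lambda>w. w @ [c]) ` S"

definition leaf_step :: "word set \<Rightarrow> nat \<Rightarrow> bool" where
  "leaf_step S i \<longleftrightarrow> (\<exists>w \<in> level S i. (\<forall>u \<in> level S i - {w}. related w u) \<and>
      level S (Suc i) = app (level S i - {w}) X)"

definition branch_step :: "word set \<Rightarrow> nat \<Rightarrow> bool" where
  "branch_step S i \<longleftrightarrow> (\<exists>w \<in> level S i.
      level S (Suc i) = app {z \<in> level S i. lex_less z w} X \<union> {w @ [X], w @ [R]}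
                        \<union> app {z \<in> level S i. lex_less w z} R)"

definition perp_step :: "word set \<Rightarrow> nat \<Rightarrow> bool" where
  "perp_step S i \<longleftrightarrow> (\<exists>v \<in> level S i. \<exists>w \<in> level S i. unrelated v w \<and> lex_less v w \<and>
      level S (Suc i) = app {z \<in> level S i. lex_less z v} X \<union> {v @ [R]}
         \<union> app {z \<in> level S i. lex_less v z \<and> lex_less z w \<and> perp z v} X
         \<union> app {z \<in> level S i. lex_less v z \<and> lex_less z w \<and> \<not> perp z v} R
         \<union> {w @ [X]} \<union> app {z \<in> level S i. lex_less w z} R \<and>
      (\<forall>u \<in> level S i. lex_less v u \<and> lex_less u w \<longrightarrow> perp u v \<or> perp u w))"

definition prec_step :: "word set \<Rightarrow> nat \<Rightarrow> bool" where
  "prec_step S i \<longleftrightarrow> (\<exists>v \<in> level S i. \<exists>w \<in> level S i. unrelated v w \<and> lex_less v w \<and>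
      level S (Suc i) = app {z \<in> level S i. lex_less z v \<and> perp z v} X
         \<union> app {z \<in> level S i. lex_less z v \<and> \<not> perp z v} L \<union> {v @ [L]}
         \<union> app {z \<in> level S i. lex_less v z \<and> lex_less z w} X \<union> {w @ [R]}
         \<union> app {z \<in> level S i. lex_less w z \<and> perp w z} X
         \<union> app {z \<in> level S i. lex_less w z \<and> \<not> perp w z} R \<and>
      (\<forall>u \<in> level S i. lex_less u v \<longrightarrow> preceq u w \<or> perp u v) \<and>
      (\<forall>u \<in> level S i. lex_less w u \<longrightarrow> preceq v u \<or> perp w u))"

text \<open>Poset-type. The range "0 \<le> i < max length" is rendered as: some word of S is longer than i.\<close>
definition poset_type :: "word set \<Rightarrow> bool" where
  "poset_type S \<longleftrightarrow> S = closure S \<and>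
    (\<forall>i. (\<exists>w\<in>S. i < length w) \<longrightarrow>
       length (filter id [leaf_step S i, branch_step S i, perp_step S i, prec_step S i]) = 1)"

definition isomorphic_level :: "word set \<Rightarrow> word set \<Rightarrow> bool" where
  "isomorphic_level A B \<longleftrightarrow> (\<exists>f. bij_betw f A B \<and> (\<forall>x\<in>A. \<forall>y\<in>A.
      (lex_le x y \<longleftrightarrow> lex_le (f x) (f y)) \<and> (preceq x y \<longleftrightarrow> preceq (f x) (f y)) \<and>
      (perp x y \<longleftrightarrow> perp (f x) (f y))))"

definition interesting :: "word set \<Rightarrow> nat set" where
  "interesting S = {i. \<not> isomorphic_level (level (closure S) i) (level (closure S) (Suc i)) \<or>
      (\<exists>u \<in> level (closure S) (Suc i). \<exists>v \<in> level (closure S) (Suc i).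
          \<not> compatible u v \<and> compatible (take i u) (take i v))}"

definition tau_map :: "word set \<Rightarrow> word \<Rightarrow> word" where
  "tau_map S w = nths w (interesting S)"

definition tau :: "word set \<Rightarrow> word set" where
  "tau S = tau_map S ` S"

end

theory Submission
  imports Defs
begin

text \<open>Let \<open>T\<close> be the subtree of \<open>S\<close> spanned by the leaves \<open>S'\<close>. At each level the step
  of \<open>S\<close> either survives in \<open>T\<close> as a step of the same kind, or it degenerates because the
  removed leaf, the branching word or one of the two distinguished words is missing from \<open>T\<close>;
  a degenerate step appends one letter to every word and changes none of \<open>\<le>\<^sub>l\<^sub>e\<^sub>x\<close>,
  \<open>\<prec>\<close>, \<open>\<perp>\<close> and compatibility. For the New-\<open>\<perp>\<close> and New-\<open>\<preceq>\<close> steps this rests on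
  constraints on \<open>\<prec>\<close> and \<open>\<perp>\<close> along the lexicographic order, which hold on level 0 and
  are preserved by all four steps. Hence degenerate levels are uninteresting. Conversely, an
  uninteresting level keeps its cardinality, which rules out the leaf and branching steps, so
  every word has exactly one child there and all relations persist. Deleting the uninteresting
  positions thus maps each interesting level of \<open>T\<close> and its successor onto consecutive levels
  of \<open>\<tau>(T)\<close>, preserving all relations, and \<open>\<tau>(T)\<close> performs the same steps as \<open>T\<close>.
  Finally, deleting positions commutes with taking prefixes.\<close>


section \<open>Letters and the lexicographic order\<close>

lemma let_less_simps [simp]:
  "let_less L X" "let_less L R" "let_less X R" "\<not> let_less x x"
  "\<not> let_less X L" "\<not> let_less R L" "\<not> let_less R X"
  by (auto simp: let_less_def)

lemma let_less_total: "x \<noteq> y \<Longrightarrow> let_less x y \<or> let_less y x"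
  by (cases x; cases y) simp_all

lemma let_less_asym: "let_less x y \<Longrightarrow> \<not> let_less y x"
  by (cases x; cases y) simp_all

lemma let_le_iff_not_less: "let_le x y \<longleftrightarrow> \<not> let_less y x"
  by (cases x; cases y) (simp_all add: let_le_def let_less_def)

definition letter_less :: "letter rel" where
  "letter_less = {(x, y). let_less x y}"

lemma lex_less_iff_lexord: "lex_less u v \<longleftrightarrow> (u, v) \<in> lexord letter_less"
proof -
  have "(\<exists>k. v = u @ k) \<and> u \<noteq> v \<longleftrightarrow> length u < length v \<and> take (length u) v = u"
    by (metis append_eq_conv_conj append_self_conv length_append linorder_neqE_nat not_add_less1)
  moreover have "u \<noteq> v" if "i < length u" "i < length v" "let_less (u ! i) (v ! i)" for i
    using that by auto
  ultimately show ?thesis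
    unfolding lex_less_def lex_le_def lexord_take_index_conv letter_less_def by auto
qed

lemma lex_less_irrefl [simp]: "\<not> lex_less u u"
  by (simp add: lex_less_def)

lemma lex_less_trans: "lex_less u v \<Longrightarrow> lex_less v w \<Longrightarrow> lex_less u w"
  unfolding lex_less_iff_lexord
  by (rule lexord_trans) (auto simp: letter_less_def trans_def let_less_def)

lemma lex_less_asym: "lex_less u v \<Longrightarrow> \<not> lex_less v u"
  using lex_less_trans lex_less_irrefl by blast

lemma lex_less_trichotomy: "lex_less u v \<or> u = v \<or> lex_less v u"
  unfolding lex_less_iff_lexord
  by (rule lexord_linear) (auto simp: letter_less_def dest: let_less_total)

lemma lex_le_refl [simp]: "lex_le u u"
  by (simp add: lex_le_def)

lemma lex_le_iff_less_or_eq: "lex_le u v \<longleftrightarrow> lex_less u v \<or> u = v"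
  by (auto simp: lex_less_def lex_le_def)

lemma lex_less_snoc:
  assumes "length a = length b"
  shows "lex_less (a @ [x]) (b @ [y]) \<longleftrightarrow> lex_less a b \<or> (a = b \<and> let_less x y)"
proof (cases "a = b")
  case True
  have "irrefl letter_less"
    by (simp add: irrefl_def letter_less_def)
  then show ?thesis
    using True by (simp add: lex_less_iff_lexord letter_less_def)
next
  case False
  then show ?thesis
    using assms lexord_sufI[of a b] lexord_sufE[of a "[x]" b "[y]"]
    by (auto simp: lex_less_iff_lexord)
qed


section \<open>Appending a letter to words of equal length\<close>

definition lower_somewhere :: "word \<Rightarrow> word \<Rightarrow> bool" where
  "lower_somewhere a b \<longleftrightarrow> (\<exists>i<length a. i < length b \<and> let_less (a ! i) (b ! i))"

definition RL_clash :: "word \<Rightarrow> word \<Rightarrow> bool" where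
  "RL_clash a b \<longleftrightarrow> (\<exists>i<length a. i < length b \<and> a ! i = R \<and> b ! i = L)"

lemma ex_position_snoc:
  assumes "length a = length b"
  shows "(\<exists>i<length (a @ [x]). i < length (b @ [y]) \<and> Q ((a @ [x]) ! i) ((b @ [y]) ! i)) \<longleftrightarrow>
    (\<exists>i<length a. i < length b \<and> Q (a ! i) (b ! i)) \<or> Q x y"
proof -
  have positions: "(\<exists>i<length (a @ [x]). i < length (b @ [y]) \<and> P i) \<longleftrightarrow>
      (\<exists>i<length a. P i) \<or> P (length a)" for P
    using assms by (auto simp: less_Suc_eq)
  show ?thesis
    unfolding positions using assms by (auto simp: nth_append)
qed

lemma lower_somewhere_snoc:
  "length a = length b \<Longrightarrow>
    lower_somewhere (a @ [x]) (b @ [y]) \<longleftrightarrow> lower_somewhere a b \<or> let_less x y"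
  unfolding lower_somewhere_def by (rule ex_position_snoc)

lemma RL_clash_snoc:
  "length a = length b \<Longrightarrow> RL_clash (a @ [x]) (b @ [y]) \<longleftrightarrow> RL_clash a b \<or> (x = R \<and> y = L)"
  unfolding RL_clash_def by (rule ex_position_snoc)

lemma perp_iff_lower_somewhere: "perp a b \<longleftrightarrow> lower_somewhere a b \<and> lower_somewhere b a"
  unfolding perp_def lower_somewhere_def by blast

lemma perp_snoc:
  "length a = length b \<Longrightarrow> perp (a @ [x]) (b @ [y]) \<longleftrightarrow>
    (lower_somewhere a b \<or> let_less x y) \<and> (lower_somewhere b a \<or> let_less y x)"
  by (simp add: perp_iff_lower_somewhere lower_somewhere_snoc)

lemma prec_snoc:
  assumes "length a = length b"
  shows "prec (a @ [x]) (b @ [y]) \<longleftrightarrow> prec a b \<or> (\<not> lower_somewhere b a \<and> x = L \<and> y = R)"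
proof
  assume "prec (a @ [x]) (b @ [y])"
  then obtain i where i: "i < Suc (length a)" "(a @ [x]) ! i = L" "(b @ [y]) ! i = R"
    "\<forall>j<i. let_le ((a @ [x]) ! j) ((b @ [y]) ! j)"
    using assms by (auto simp: prec_def)
  show "prec a b \<or> (\<not> lower_somewhere b a \<and> x = L \<and> y = R)"
  proof (cases "i < length a")
    case True
    then show ?thesis
      using i assms unfolding prec_def by (intro disjI1 exI[of _ i]) (auto simp: nth_append)
  next
    case False
    then show ?thesis
      using i assms by (auto simp: lower_somewhere_def nth_append let_le_iff_not_less)
  qed
next
  assume "prec a b \<or> (\<not> lower_somewhere b a \<and> x = L \<and> y = R)"
  then show "prec (a @ [x]) (b @ [y])"
  proof
    assume "prec a b"
    then obtain i where "i < length a" "a ! i = L" "b ! i = R" "\<forall>j<i. let_le (a ! j) (b ! j)"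
      using assms by (auto simp: prec_def)
    then show ?thesis
      using assms unfolding prec_def by (intro exI[of _ i]) (simp add: nth_append)
  next
    assume "\<not> lower_somewhere b a \<and> x = L \<and> y = R"
    then show ?thesis
      using assms unfolding prec_def lower_somewhere_def
      by (intro exI[of _ "length a"]) (auto simp: nth_append let_le_iff_not_less)
  qed
qed

lemma lower_somewhere_irrefl [simp]: "\<not> lower_somewhere a a"
  by (simp add: lower_somewhere_def)

lemma prec_irrefl [simp]: "\<not> prec a a"
  by (simp add: prec_def)

lemma perp_irrefl [simp]: "\<not> perp a a"
  by (simp add: perp_iff_lower_somewhere)

lemma perp_sym: "perp a b \<longleftrightarrow> perp b a"
  unfolding perp_def by blast

lemma compat_ord_refl [simp]: "compat_ord u u"
  by (auto simp: compat_ord_def)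

lemma compat_ord_iff_RL_clash:
  "compat_ord u v \<longleftrightarrow> \<not> RL_clash u v \<and> (RL_clash v u \<longrightarrow> prec u v \<and> \<not> perp u v)"
  unfolding compat_ord_def RL_clash_def by auto

lemma lex_less_imp_lower_somewhere:
  "length a = length b \<Longrightarrow> lex_less a b \<Longrightarrow> lower_somewhere a b"
  unfolding lex_less_def lex_le_def lower_somewhere_def by auto

lemma lower_somewhere_iff_lex_less:
  "length a = length b \<Longrightarrow> lower_somewhere a b \<longleftrightarrow> lex_less a b \<or> (lex_less b a \<and> perp a b)"
  using lex_less_trichotomy[of a b] lex_less_imp_lower_somewhere[of a b]
    lex_less_imp_lower_somewhere[of b a] perp_iff_lower_somewhere[of a b] lex_less_asym[of a b]
  by auto

lemma snoc_lex_ordered: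
  assumes len: "length a = length b" and ab: "lex_less a b" and nprec: "\<not> prec b a"
  shows "lex_less (a @ [x]) (b @ [y])"
    and "prec (a @ [x]) (b @ [y]) \<longleftrightarrow> prec a b \<or> (\<not> perp a b \<and> x = L \<and> y = R)"
    and "\<not> prec (b @ [y]) (a @ [x])"
    and "perp (a @ [x]) (b @ [y]) \<longleftrightarrow> perp a b \<or> let_less y x"
proof -
  have ab': "lower_somewhere a b" and ba: "lower_somewhere b a \<longleftrightarrow> perp a b"
    using lex_less_imp_lower_somewhere[OF len ab] perp_iff_lower_somewhere[of a b] by auto
  show "lex_less (a @ [x]) (b @ [y])"
    using lex_less_snoc[OF len] ab by auto
  show "prec (a @ [x]) (b @ [y]) \<longleftrightarrow> prec a b \<or> (\<not> perp a b \<and> x = L \<and> y = R)"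
    using prec_snoc[OF len] ba by auto
  show "\<not> prec (b @ [y]) (a @ [x])"
    using prec_snoc[of b a] len nprec ab' by auto
  show "perp (a @ [x]) (b @ [y]) \<longleftrightarrow> perp a b \<or> let_less y x"
    using perp_snoc[OF len] ab' ba by auto
qed

lemma snoc_same_prefix:
  "prec (a @ [x]) (a @ [y]) \<longleftrightarrow> x = L \<and> y = R" "\<not> perp (a @ [x]) (a @ [y])"
  "lex_less (a @ [x]) (a @ [y]) \<longleftrightarrow> let_less x y"
  using prec_snoc[of a a x y] perp_snoc[of a a x y] lex_less_snoc[of a a x y] let_less_asym
  by auto

lemma lex_le_snocD: "length a = length b \<Longrightarrow> lex_le (a @ [x]) (b @ [y]) \<Longrightarrow> lex_le a b"
  by (auto simp: lex_le_iff_less_or_eq lex_less_snoc)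


section \<open>Configurations of two relations along a linear order\<close>

definition strict_linear_on :: "'a set \<Rightarrow> ('a \<Rightarrow> 'a \<Rightarrow> bool) \<Rightarrow> bool" where
  "strict_linear_on A lt \<longleftrightarrow> (\<forall>a\<in>A. \<not> lt a a) \<and> (\<forall>a\<in>A. \<forall>b\<in>A. lt a b \<or> a = b \<or> lt b a) \<and>
     (\<forall>a\<in>A. \<forall>b\<in>A. \<forall>c\<in>A. lt a b \<longrightarrow> lt b c \<longrightarrow> lt a c)"

lemma strict_linear_on_irrefl: "strict_linear_on A lt \<Longrightarrow> x \<in> A \<Longrightarrow> \<not> lt x x"
  unfolding strict_linear_on_def by blast

lemma strict_linear_on_trichotomy:
  "strict_linear_on A lt \<Longrightarrow> x \<in> A \<Longrightarrow> y \<in> A \<Longrightarrow> lt x y \<or> x = y \<or> lt y x"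
  unfolding strict_linear_on_def by blast

lemma strict_linear_on_trans:
  "strict_linear_on A lt \<Longrightarrow> x \<in> A \<Longrightarrow> y \<in> A \<Longrightarrow> z \<in> A \<Longrightarrow> lt x y \<longrightarrow> lt y z \<longrightarrow> lt x z"
  unfolding strict_linear_on_def by blast

lemma strict_linear_on_lex_less: "strict_linear_on A lex_less"
  unfolding strict_linear_on_def using lex_less_trans lex_less_trichotomy by auto

text \<open>With \<open>lt\<close>, \<open>P\<close> and \<open>Q\<close> the relations \<open><\<^sub>l\<^sub>e\<^sub>x\<close>, \<open>\<prec>\<close> and \<open>\<perp>\<close>, these constraints hold
  on every level of a poset-type. They are what makes a New-\<open>\<perp>\<close> or New-\<open>\<preceq>\<close> step that has
  lost one of its two distinguished words harmless.\<close>
definition level_axioms ::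
    "'a set \<Rightarrow> ('a \<Rightarrow> 'a \<Rightarrow> bool) \<Rightarrow> ('a \<Rightarrow> 'a \<Rightarrow> bool) \<Rightarrow> ('a \<Rightarrow> 'a \<Rightarrow> bool) \<Rightarrow> bool" where
  "level_axioms A lt P Q \<longleftrightarrow>
    (\<forall>a\<in>A. \<forall>b\<in>A. lt a b \<longrightarrow> \<not> P b a \<and> \<not> (P a b \<and> Q a b)) \<and>
    (\<forall>a\<in>A. \<forall>b\<in>A. \<forall>c\<in>A. lt a b \<longrightarrow> lt b c \<longrightarrow>
       (P a b \<and> P b c \<longrightarrow> P a c) \<and> (\<not> Q a b \<and> Q a c \<longrightarrow> Q b c) \<and>
       (P a b \<and> \<not> P a c \<longrightarrow> Q b c) \<and> (\<not> P a b \<and> \<not> Q a b \<and> \<not> P a c \<and> \<not> Q a c \<longrightarrow> \<not> P b c))"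

lemma level_axioms_pair:
  "level_axioms A lt P Q \<Longrightarrow> x \<in> A \<Longrightarrow> y \<in> A \<Longrightarrow> lt x y \<longrightarrow> \<not> P y x \<and> \<not> (P x y \<and> Q x y)"
  unfolding level_axioms_def by blast

lemma level_axioms_triple:
  "level_axioms A lt P Q \<Longrightarrow> x \<in> A \<Longrightarrow> y \<in> A \<Longrightarrow> z \<in> A \<Longrightarrow> lt x y \<longrightarrow> lt y z \<longrightarrow>
    (P x y \<and> P y z \<longrightarrow> P x z) \<and> (\<not> Q x y \<and> Q x z \<longrightarrow> Q y z) \<and>
    (P x y \<and> \<not> P x z \<longrightarrow> Q y z) \<and> (\<not> P x y \<and> \<not> Q x y \<and> \<not> P x z \<and> \<not> Q x z \<longrightarrow> \<not> P y z)"
  unfolding level_axioms_def by blast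

lemma level_axiomsI:
  assumes "\<And>a b. a \<in> A \<Longrightarrow> b \<in> A \<Longrightarrow> lt a b \<Longrightarrow> \<not> P b a"
    and "\<And>a b. a \<in> A \<Longrightarrow> b \<in> A \<Longrightarrow> lt a b \<Longrightarrow> \<not> (P a b \<and> Q a b)"
    and "\<And>a b c. a \<in> A \<Longrightarrow> b \<in> A \<Longrightarrow> c \<in> A \<Longrightarrow> lt a b \<Longrightarrow> lt b c \<Longrightarrow>
      P a b \<Longrightarrow> P b c \<Longrightarrow> P a c"
    and "\<And>a b c. a \<in> A \<Longrightarrow> b \<in> A \<Longrightarrow> c \<in> A \<Longrightarrow> lt a b \<Longrightarrow> lt b c \<Longrightarrow>
      \<not> Q a b \<Longrightarrow> Q a c \<Longrightarrow> Q b c"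
    and "\<And>a b c. a \<in> A \<Longrightarrow> b \<in> A \<Longrightarrow> c \<in> A \<Longrightarrow> lt a b \<Longrightarrow> lt b c \<Longrightarrow>
      P a b \<Longrightarrow> \<not> P a c \<Longrightarrow> Q b c"
    and "\<And>a b c. a \<in> A \<Longrightarrow> b \<in> A \<Longrightarrow> c \<in> A \<Longrightarrow> lt a b \<Longrightarrow> lt b c \<Longrightarrow>
      \<not> P a b \<Longrightarrow> \<not> Q a b \<Longrightarrow> \<not> P a c \<Longrightarrow> \<not> Q a c \<Longrightarrow> \<not> P b c"
  shows "level_axioms A lt P Q"
  unfolding level_axioms_def by (intro conjI ballI impI) (simp_all add: assms)

lemma level_axioms_subset: "level_axioms A lt P Q \<Longrightarrow> B \<subseteq> A \<Longrightarrow> level_axioms B lt P Q"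
  unfolding level_axioms_def by blast

lemma level_axioms_transfer:
  assumes ax: "level_axioms A lt P Q" and linear: "strict_linear_on A lt"
    and lt: "\<And>x y. x \<in> A \<Longrightarrow> y \<in> A \<Longrightarrow> lt' (f x) (f y) \<longleftrightarrow> lt x y"
    and rel: "\<And>x y. x \<in> A \<Longrightarrow> y \<in> A \<Longrightarrow> lt x y \<Longrightarrow>
      (P' (f x) (f y) \<longleftrightarrow> P x y) \<and> (P' (f y) (f x) \<longleftrightarrow> P y x) \<and> (Q' (f x) (f y) \<longleftrightarrow> Q x y)"
  shows "level_axioms (f ` A) lt' P' Q'"
proof (rule level_axiomsI)
  fix a b assume "a \<in> f ` A" "b \<in> f ` A" "lt' a b"
  then obtain x y where x: "x \<in> A" and y: "y \<in> A" and "a = f x" "b = f y" "lt x y"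
    using lt by auto
  then show "\<not> P' b a" "\<not> (P' a b \<and> Q' a b)"
    using level_axioms_pair[OF ax x y] rel[OF x y] by auto
next
  fix a b c assume "a \<in> f ` A" "b \<in> f ` A" "c \<in> f ` A" "lt' a b" "lt' b c"
  then obtain x y z where x: "x \<in> A" and y: "y \<in> A" and z: "z \<in> A"
    and abc: "a = f x" "b = f y" "c = f z" and xy: "lt x y" and yz: "lt y z"
    using lt by auto
  have xz: "lt x z" using strict_linear_on_trans[OF linear x y z] xy yz by blast
  note t = level_axioms_triple[OF ax x y z, rule_format, OF xy yz]
  show "P' a b \<Longrightarrow> P' b c \<Longrightarrow> P' a c" "\<not> Q' a b \<Longrightarrow> Q' a c \<Longrightarrow> Q' b c"
    "P' a b \<Longrightarrow> \<not> P' a c \<Longrightarrow> Q' b c" "\<not> P' a b \<Longrightarrow> \<not> Q' a b \<Longrightarrow> \<not> P' a c \<Longrightarrow> \<not> Q' a c \<Longrightarrow> \<not> P' b c"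
    using t rel[OF x y xy] rel[OF y z yz] rel[OF x z xz] abc by auto
qed

text \<open>The letters appended by a New-\<open>\<perp>\<close> and a New-\<open>\<preceq>\<close> step at \<open>v <\<^sub>l\<^sub>e\<^sub>x w\<close>, with
  \<open>lt\<close> and \<open>Q\<close> in place of \<open><\<^sub>l\<^sub>e\<^sub>x\<close> and \<open>\<perp>\<close>.\<close>
definition new_perp_letter ::
    "('a \<Rightarrow> 'a \<Rightarrow> bool) \<Rightarrow> ('a \<Rightarrow> 'a \<Rightarrow> bool) \<Rightarrow> 'a \<Rightarrow> 'a \<Rightarrow> 'a \<Rightarrow> letter" where
  "new_perp_letter lt Q v w z = (if lt z v then X else if z = v then R
     else if lt z w then (if Q v z then X else R) else if z = w then X else R)"

definition new_prec_letter ::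
    "('a \<Rightarrow> 'a \<Rightarrow> bool) \<Rightarrow> ('a \<Rightarrow> 'a \<Rightarrow> bool) \<Rightarrow> 'a \<Rightarrow> 'a \<Rightarrow> 'a \<Rightarrow> letter" where
  "new_prec_letter lt Q v w z = (if lt z v then (if Q z v then X else L) else if z = v then L
     else if lt z w then X else if z = w then R else if Q w z then X else R)"

lemma new_perp_letter_not_L: "new_perp_letter lt Q v w z \<noteq> L"
  unfolding new_perp_letter_def by auto

text \<open>Appending such letters to the words of a level of a poset-type changes none of the
  relations.\<close>
definition harmless_letters ::
    "'a set \<Rightarrow> ('a \<Rightarrow> 'a \<Rightarrow> bool) \<Rightarrow> ('a \<Rightarrow> 'a \<Rightarrow> bool) \<Rightarrow> ('a \<Rightarrow> 'a \<Rightarrow> bool) \<Rightarrow> ('a \<Rightarrow> letter) \<Rightarrow> bool"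
  where "harmless_letters A lt P Q c \<longleftrightarrow> (\<forall>x\<in>A. \<forall>y\<in>A. lt x y \<longrightarrow> \<not> (c x = R \<and> c y = L) \<and>
    (let_less (c y) (c x) \<longrightarrow> Q x y) \<and> (c x = L \<and> c y = R \<longrightarrow> P x y \<and> \<not> Q x y))"

lemma harmless_lettersI:
  assumes "\<And>x y. x \<in> A \<Longrightarrow> y \<in> A \<Longrightarrow> lt x y \<Longrightarrow>
    \<not> (c x = R \<and> c y = L) \<and> (let_less (c y) (c x) \<longrightarrow> Q x y) \<and> (c x = L \<and> c y = R \<longrightarrow> P x y \<and> \<not> Q x y)"
  shows "harmless_letters A lt P Q c"
  using assms unfolding harmless_letters_def by blast

lemma harmless_letters_monotone:
  assumes "\<And>x. x \<in> A \<Longrightarrow> c x \<noteq> L" and "\<And>x y. x \<in> A \<Longrightarrow> y \<in> A \<Longrightarrow> lt x y \<Longrightarrow> c y = X \<Longrightarrow> c x = X"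
  shows "harmless_letters A lt P Q c"
proof (rule harmless_lettersI)
  fix x y assume "x \<in> A" "y \<in> A" "lt x y"
  then have "c x \<noteq> L" "c y \<noteq> L" "c y = X \<Longrightarrow> c x = X" using assms by auto
  then show "\<not> (c x = R \<and> c y = L) \<and> (let_less (c y) (c x) \<longrightarrow> Q x y) \<and>
      (c x = L \<and> c y = R \<longrightarrow> P x y \<and> \<not> Q x y)"
    by (cases "c x"; cases "c y") (auto simp: let_less_def)
qed

locale distinguished_pair =
  fixes A :: "'a set" and lt P Q :: "'a \<Rightarrow> 'a \<Rightarrow> bool" and v w :: 'a
  assumes linear: "strict_linear_on A lt" and axioms: "level_axioms A lt P Q"
    and v_in: "v \<in> A" and w_in: "w \<in> A" and v_less_w: "lt v w"
begin

lemma lt_irrefl: "x \<in> A \<Longrightarrow> \<not> lt x x"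
  using strict_linear_on_irrefl[OF linear] .

lemma lt_trans: "x \<in> A \<Longrightarrow> y \<in> A \<Longrightarrow> z \<in> A \<Longrightarrow> lt x y \<Longrightarrow> lt y z \<Longrightarrow> lt x z"
  using strict_linear_on_trans[OF linear] by blast

lemma lt_asym: "x \<in> A \<Longrightarrow> y \<in> A \<Longrightarrow> lt x y \<Longrightarrow> \<not> lt y x"
  using lt_irrefl lt_trans by blast

lemma lt_trichotomy: "x \<in> A \<Longrightarrow> y \<in> A \<Longrightarrow> lt x y \<or> x = y \<or> lt y x"
  using strict_linear_on_trichotomy[OF linear] .

lemma new_prec_letter_cases:
  assumes x: "x \<in> A"
  obtains "lt x v" "Q x v" "new_prec_letter lt Q v w x = X"
    | "lt x v" "\<not> Q x v" "new_prec_letter lt Q v w x = L"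
    | "x = v" "new_prec_letter lt Q v w x = L"
    | "lt v x" "lt x w" "new_prec_letter lt Q v w x = X"
    | "x = w" "new_prec_letter lt Q v w x = R"
    | "lt w x" "Q w x" "new_prec_letter lt Q v w x = X"
    | "lt w x" "\<not> Q w x" "new_prec_letter lt Q v w x = R"
proof -
  have "(lt x v \<and> Q x v \<and> new_prec_letter lt Q v w x = X) \<or>
      (lt x v \<and> \<not> Q x v \<and> new_prec_letter lt Q v w x = L) \<or>
      (x = v \<and> new_prec_letter lt Q v w x = L) \<or>
      (lt v x \<and> lt x w \<and> new_prec_letter lt Q v w x = X) \<or>
      (x = w \<and> new_prec_letter lt Q v w x = R) \<or>
      (lt w x \<and> Q w x \<and> new_prec_letter lt Q v w x = X) \<or>
      (lt w x \<and> \<not> Q w x \<and> new_prec_letter lt Q v w x = R)"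
    using lt_trichotomy[OF x v_in] lt_trichotomy[OF x w_in] lt_trans[OF v_in w_in x]
      lt_trans[OF x v_in w_in] lt_irrefl[OF v_in] lt_irrefl[OF w_in] v_less_w
    unfolding new_prec_letter_def by auto
  then show ?thesis using that by blast
qed

lemma new_prec_letter_not_RL:
  assumes x: "x \<in> A" and y: "y \<in> A" and xy: "lt x y"
  shows "\<not> (new_prec_letter lt Q v w x = R \<and> new_prec_letter lt Q v w y = L)"
proof
  assume RL: "new_prec_letter lt Q v w x = R \<and> new_prec_letter lt Q v w y = L"
  have "x = w \<or> lt w x" using RL by (cases rule: new_prec_letter_cases[OF x]) auto
  moreover have "y = v \<or> lt y v" using RL by (cases rule: new_prec_letter_cases[OF y]) auto
  ultimately show False
    using xy v_less_w lt_trans[OF w_in x y] lt_trans[OF w_in y v_in] lt_asym[OF v_in w_in] by auto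
qed

end

text \<open>The hypotheses on \<open>v\<close> and \<open>w\<close> in a New-\<open>\<perp>\<close> step, the last one being condition (A);
  for a New-\<open>\<preceq>\<close> step, \<open>below\<close> and \<open>above\<close> amount to the conditions (B1) and (B2).\<close>
locale new_perp_pair = distinguished_pair +
  assumes not_P: "\<not> P v w" and not_Q: "\<not> Q v w"
    and between: "\<And>u. u \<in> A \<Longrightarrow> lt v u \<Longrightarrow> lt u w \<Longrightarrow> Q v u \<or> Q u w"
begin

lemma level_axioms_add_perp:
  "level_axioms A lt (\<lambda>x y. lt x y \<and> P x y) (\<lambda>x y. lt x y \<and> (Q x y \<or> (x = v \<and> y = w)))"
proof (rule level_axiomsI)
  fix a b assume a: "a \<in> A" and b: "b \<in> A" and ab: "lt a b"
  show "\<not> (lt b a \<and> P b a)"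
    using lt_asym[OF a b ab] by blast
  show "\<not> ((lt a b \<and> P a b) \<and> lt a b \<and> (Q a b \<or> a = v \<and> b = w))"
    using level_axioms_pair[OF axioms a b] ab not_P by blast
next
  fix a b c assume a: "a \<in> A" and b: "b \<in> A" and c: "c \<in> A" and ab: "lt a b" and bc: "lt b c"
  note t = level_axioms_triple[OF axioms a b c, rule_format, OF ab bc]
  have ac: "lt a c" using lt_trans[OF a b c ab bc] .
  show "lt a b \<and> P a b \<Longrightarrow> lt b c \<and> P b c \<Longrightarrow> lt a c \<and> P a c"
    using t ac by blast
  show "\<not> (lt a b \<and> (Q a b \<or> a = v \<and> b = w)) \<Longrightarrow> lt a c \<and> (Q a c \<or> a = v \<and> c = w) \<Longrightarrow>
      lt b c \<and> (Q b c \<or> b = v \<and> c = w)"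
    using t ab bc between[OF b] by blast
  show "lt a b \<and> P a b \<Longrightarrow> \<not> (lt a c \<and> P a c) \<Longrightarrow> lt b c \<and> (Q b c \<or> b = v \<and> c = w)"
    using t ac bc by blast
  show "\<not> (lt a b \<and> P a b) \<Longrightarrow> \<not> (lt a b \<and> (Q a b \<or> a = v \<and> b = w)) \<Longrightarrow> \<not> (lt a c \<and> P a c) \<Longrightarrow>
      \<not> (lt a c \<and> (Q a c \<or> a = v \<and> c = w)) \<Longrightarrow> \<not> (lt b c \<and> P b c)"
    using t ac ab by blast
qed

lemma new_perp_letter_creates_only_vw:
  assumes x: "x \<in> A" and y: "y \<in> A" and xy: "lt x y"
  shows "Q x y \<or> let_less (new_perp_letter lt Q v w y) (new_perp_letter lt Q v w x) \<longleftrightarrow>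
    Q x y \<or> (x = v \<and> y = w)"
proof -
  let ?c = "new_perp_letter lt Q v w"
  have less_iff: "let_less (?c y) (?c x) \<longleftrightarrow> ?c x = R \<and> ?c y = X"
    using new_perp_letter_not_L[of lt Q v w]
    by (cases "?c x"; cases "?c y") (auto simp: let_less_def)
  have vw: "?c v = R" "?c w = X"
    using v_less_w lt_irrefl[OF v_in] lt_irrefl[OF w_in] lt_asym[OF v_in w_in]
    unfolding new_perp_letter_def by auto
  have "x = v \<and> y = w \<or> Q x y" if cx: "?c x = R" and cy: "?c y = X"
  proof -
    have cy': "lt y v \<or> (lt v y \<and> lt y w \<and> Q v y) \<or> y = w"
      using cy lt_trichotomy[OF y v_in] lt_trichotomy[OF y w_in] unfolding new_perp_letter_def
      by (auto split: if_splits)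
    consider "x = v" | "lt v x" "lt x w" "\<not> Q v x" | "lt w x"
      using cx lt_trichotomy[OF x v_in] lt_trichotomy[OF x w_in] unfolding new_perp_letter_def
      by (auto split: if_splits)
    then show ?thesis
    proof cases
      case 1
      then show ?thesis using cy' xy lt_asym[OF x y] by auto
    next
      case 2
      then show ?thesis
        using cy' xy between[OF x] level_axioms_triple[OF axioms v_in x y]
          lt_asym[OF v_in x] lt_trans[OF x y v_in] by auto
    next
      case 3
      then show ?thesis
        using cy' xy v_less_w lt_trans[OF w_in x y] lt_asym[OF w_in y] lt_trans[OF v_in w_in y]
          lt_asym[OF v_in y] lt_asym[OF x y] by auto
    qed
  qed
  then show ?thesis using less_iff vw by auto
qed

lemma harmless_new_perp_letter:
  assumes "B \<subseteq> A" "\<not> (v \<in> B \<and> w \<in> B)"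
  shows "harmless_letters B lt P Q (new_perp_letter lt Q v w)"
proof (rule harmless_lettersI)
  fix x y assume "x \<in> B" "y \<in> B" "lt x y"
  then show "\<not> (new_perp_letter lt Q v w x = R \<and> new_perp_letter lt Q v w y = L) \<and>
      (let_less (new_perp_letter lt Q v w y) (new_perp_letter lt Q v w x) \<longrightarrow> Q x y) \<and>
      (new_perp_letter lt Q v w x = L \<and> new_perp_letter lt Q v w y = R \<longrightarrow> P x y \<and> \<not> Q x y)"
    using assms new_perp_letter_creates_only_vw[of x y] new_perp_letter_not_L[of lt Q v w] by blast
qed
end

locale new_prec_pair = distinguished_pair +
  assumes not_Q: "\<not> Q v w"
    and below: "\<And>u. u \<in> A \<Longrightarrow> lt u v \<Longrightarrow> P u w \<or> Q u v"
    and above: "\<And>u. u \<in> A \<Longrightarrow> lt w u \<Longrightarrow> P v u \<or> Q w u"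
begin

lemma level_axioms_add_prec:
  "level_axioms A lt (\<lambda>x y. lt x y \<and> (P x y \<or> (x = v \<and> y = w))) (\<lambda>x y. lt x y \<and> Q x y)"
proof (rule level_axiomsI)
  fix a b assume a: "a \<in> A" and b: "b \<in> A" and ab: "lt a b"
  show "\<not> (lt b a \<and> (P b a \<or> b = v \<and> a = w))"
    using lt_asym[OF a b ab] by blast
  show "\<not> ((lt a b \<and> (P a b \<or> a = v \<and> b = w)) \<and> lt a b \<and> Q a b)"
    using level_axioms_pair[OF axioms a b] ab not_Q by blast
next
  fix a b c assume a: "a \<in> A" and b: "b \<in> A" and c: "c \<in> A" and ab: "lt a b" and bc: "lt b c"
  note t = level_axioms_triple[OF axioms a b c, rule_format, OF ab bc]
  have ac: "lt a c" using lt_trans[OF a b c ab bc] .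
  show "lt a b \<and> (P a b \<or> a = v \<and> b = w) \<Longrightarrow> lt b c \<and> (P b c \<or> b = v \<and> c = w) \<Longrightarrow>
      lt a c \<and> (P a c \<or> a = v \<and> c = w)"
    using t ac below[OF a] above[OF c] level_axioms_pair[OF axioms a b]
      level_axioms_pair[OF axioms b c] ab bc by blast
  show "\<not> (lt a b \<and> Q a b) \<Longrightarrow> lt a c \<and> Q a c \<Longrightarrow> lt b c \<and> Q b c"
    using t ab bc by blast
  show "lt a b \<and> (P a b \<or> a = v \<and> b = w) \<Longrightarrow> \<not> (lt a c \<and> (P a c \<or> a = v \<and> c = w)) \<Longrightarrow>
      lt b c \<and> Q b c"
    using t ac bc above[OF c] by blast
  show "\<not> (lt a b \<and> (P a b \<or> a = v \<and> b = w)) \<Longrightarrow> \<not> (lt a b \<and> Q a b) \<Longrightarrow>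
      \<not> (lt a c \<and> (P a c \<or> a = v \<and> c = w)) \<Longrightarrow> \<not> (lt a c \<and> Q a c) \<Longrightarrow>
      \<not> (lt b c \<and> (P b c \<or> b = v \<and> c = w))"
    using t ac ab below[OF a] by blast
qed

lemma new_prec_letter_no_new_Q:
  assumes x: "x \<in> A" and y: "y \<in> A" and xy: "lt x y"
    and less: "let_less (new_prec_letter lt Q v w y) (new_prec_letter lt Q v w x)"
  shows "Q x y"
proof -
  have "(new_prec_letter lt Q v w x = X \<and> new_prec_letter lt Q v w y = L) \<or>
      (new_prec_letter lt Q v w x = R \<and> new_prec_letter lt Q v w y \<noteq> R)"
    using less by (cases "new_prec_letter lt Q v w x"; cases "new_prec_letter lt Q v w y") auto
  then show ?thesis
  proof
    assume XL: "new_prec_letter lt Q v w x = X \<and> new_prec_letter lt Q v w y = L"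
    then have yv: "(lt y v \<and> \<not> Q y v) \<or> y = v"
      by (cases rule: new_prec_letter_cases[OF y]) auto
    then have "lt x v"
      using xy lt_trans[OF x y v_in] by auto
    then have "Q x v"
      using XL lt_asym[OF x v_in] lt_trans[OF x v_in w_in] v_less_w lt_asym[OF x w_in]
      by (cases rule: new_prec_letter_cases[OF x]) auto
    then show ?thesis
      using yv level_axioms_triple[OF axioms x y v_in] xy \<open>lt x v\<close> by auto
  next
    assume RnR: "new_prec_letter lt Q v w x = R \<and> new_prec_letter lt Q v w y \<noteq> R"
    then have xw: "x = w \<or> (lt w x \<and> \<not> Q w x)"
      by (cases rule: new_prec_letter_cases[OF x]) auto
    then have "lt w y"
      using xy lt_trans[OF w_in x y] by auto
    then have "Q w y"
      using RnR lt_asym[OF w_in y] lt_asym[OF v_in y] lt_trans[OF v_in w_in y] v_less_w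
      by (cases rule: new_prec_letter_cases[OF y]) auto
    then show ?thesis
      using xw level_axioms_triple[OF axioms w_in x y] xy \<open>lt w y\<close> by auto
  qed
qed

lemma new_prec_letter_LR:
  assumes x: "x \<in> A" and y: "y \<in> A" and xy: "lt x y" and not_vw: "\<not> (x = v \<and> y = w)"
    and "new_prec_letter lt Q v w x = L" and "new_prec_letter lt Q v w y = R"
  shows "P x y \<and> \<not> Q x y"
proof -
  have xv: "(lt x v \<and> \<not> Q x v) \<or> x = v"
    using assms(5) by (cases rule: new_prec_letter_cases[OF x]) auto
  have wy: "y = w \<or> (lt w y \<and> \<not> Q w y)"
    using assms(6) by (cases rule: new_prec_letter_cases[OF y]) auto
  have "P x y"
  proof (cases "x = v")
    case True
    then show ?thesis using wy not_vw above[OF y] by auto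
  next
    case False
    then have "lt x v" "P x w" using xv below[OF x] by auto
    show ?thesis
    proof (cases "y = w")
      case True
      then show ?thesis using \<open>P x w\<close> by simp
    next
      case False
      then have "lt w y" "\<not> Q w y" using wy by auto
      moreover have "lt x w" using lt_trans[OF x v_in w_in \<open>lt x v\<close> v_less_w] .
      ultimately show ?thesis
        using level_axioms_triple[OF axioms x w_in y] \<open>P x w\<close> by auto
    qed
  qed
  then show ?thesis using level_axioms_pair[OF axioms x y] xy by auto
qed

lemma new_prec_letter_creates_only_vw:
  assumes x: "x \<in> A" and y: "y \<in> A" and xy: "lt x y"
  shows "P x y \<or> (\<not> Q x y \<and> new_prec_letter lt Q v w x = L \<and> new_prec_letter lt Q v w y = R) \<longleftrightarrow>
    P x y \<or> (x = v \<and> y = w)"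
proof -
  have "\<not> Q v w \<and> new_prec_letter lt Q v w v = L \<and> new_prec_letter lt Q v w w = R"
    using not_Q lt_irrefl[OF v_in] lt_irrefl[OF w_in] lt_asym[OF v_in w_in] v_less_w
    unfolding new_prec_letter_def by auto
  then show ?thesis using new_prec_letter_LR[OF x y xy] by blast
qed

lemma harmless_new_prec_letter:
  assumes "B \<subseteq> A" "\<not> (v \<in> B \<and> w \<in> B)"
  shows "harmless_letters B lt P Q (new_prec_letter lt Q v w)"
proof (rule harmless_lettersI)
  fix x y assume "x \<in> B" "y \<in> B" "lt x y"
  then show "\<not> (new_prec_letter lt Q v w x = R \<and> new_prec_letter lt Q v w y = L) \<and>
      (let_less (new_prec_letter lt Q v w y) (new_prec_letter lt Q v w x) \<longrightarrow> Q x y) \<and>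
      (new_prec_letter lt Q v w x = L \<and> new_prec_letter lt Q v w y = R \<longrightarrow> P x y \<and> \<not> Q x y)"
    using assms new_prec_letter_not_RL[of x y] new_prec_letter_no_new_Q[of x y]
      new_prec_letter_LR[of x y] by blast
qed
end

definition snoc_less :: "('a \<Rightarrow> 'a \<Rightarrow> bool) \<Rightarrow> 'a \<times> letter \<Rightarrow> 'a \<times> letter \<Rightarrow> bool" where
  "snoc_less lt p q \<longleftrightarrow> lt (fst p) (fst q) \<or> (fst p = fst q \<and> let_less (snd p) (snd q))"

lemma strict_linear_on_snoc_less:
  assumes linear: "strict_linear_on A lt" and B: "B \<subseteq> A \<times> UNIV"
  shows "strict_linear_on B (snoc_less lt)"
  unfolding strict_linear_on_def
proof (intro conjI ballI impI)
  fix p assume "p \<in> B"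
  then show "\<not> snoc_less lt p p"
    using strict_linear_on_irrefl[OF linear] B unfolding snoc_less_def by auto
next
  fix p q assume "p \<in> B" "q \<in> B"
  then have "fst p \<in> A" "fst q \<in> A" using B by auto
  then have "lt (fst p) (fst q) \<or> fst p = fst q \<or> lt (fst q) (fst p)"
    using strict_linear_on_trichotomy[OF linear] by blast
  moreover have "snd p = snd q \<or> let_less (snd p) (snd q) \<or> let_less (snd q) (snd p)"
    using let_less_total by blast
  ultimately show "snoc_less lt p q \<or> p = q \<or> snoc_less lt q p"
    unfolding snoc_less_def by (auto simp: prod_eq_iff)
next
  fix p q r assume "p \<in> B" "q \<in> B" "r \<in> B" and pq: "snoc_less lt p q" and qr: "snoc_less lt q r"
  then have "fst p \<in> A" "fst q \<in> A" "fst r \<in> A" using B by auto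
  then have "lt (fst p) (fst q) \<Longrightarrow> lt (fst q) (fst r) \<Longrightarrow> lt (fst p) (fst r)"
    using strict_linear_on_trans[OF linear] by blast
  moreover have "let_less x y \<Longrightarrow> let_less y z \<Longrightarrow> let_less x z" for x y z
    by (simp add: let_less_def)
  ultimately show "snoc_less lt p r"
    using pq qr unfolding snoc_less_def by auto
qed

lemma level_axioms_pairs:
  assumes ax: "level_axioms A lt P Q" and linear: "strict_linear_on A lt" and B: "B \<subseteq> A \<times> UNIV"
  shows "level_axioms B (snoc_less lt) (\<lambda>p q. lt (fst p) (fst q) \<and> P (fst p) (fst q))
    (\<lambda>p q. lt (fst p) (fst q) \<and> Q (fst p) (fst q))"
proof (rule level_axiomsI)
  fix a b assume "a \<in> B" "b \<in> B"
  then have a: "fst a \<in> A" and b: "fst b \<in> A" using B by auto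
  show "\<not> (lt (fst b) (fst a) \<and> P (fst b) (fst a))" if "snoc_less lt a b"
    using that strict_linear_on_trans[OF linear a b a] strict_linear_on_irrefl[OF linear a]
    unfolding snoc_less_def by auto
  show "\<not> ((lt (fst a) (fst b) \<and> P (fst a) (fst b)) \<and> lt (fst a) (fst b) \<and> Q (fst a) (fst b))"
    using level_axioms_pair[OF ax a b] by auto
next
  fix a b c assume "a \<in> B" "b \<in> B" "c \<in> B" and ab: "snoc_less lt a b" and bc: "snoc_less lt b c"
  then have a: "fst a \<in> A" and b: "fst b \<in> A" and c: "fst c \<in> A" using B by auto
  note t = level_axioms_triple[OF ax a b c, rule_format]
  have ab': "lt (fst a) (fst b) \<or> fst a = fst b" and bc': "lt (fst b) (fst c) \<or> fst b = fst c"
    using ab bc unfolding snoc_less_def by auto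
  have tr: "lt (fst a) (fst c)" if "lt (fst a) (fst b)" "lt (fst b) (fst c)"
    using strict_linear_on_trans[OF linear a b c] that by auto
  have ir: "\<not> lt (fst a) (fst a)" "\<not> lt (fst b) (fst b)"
    using strict_linear_on_irrefl[OF linear] a b by auto
  show "lt (fst a) (fst b) \<and> P (fst a) (fst b) \<Longrightarrow> lt (fst b) (fst c) \<and> P (fst b) (fst c) \<Longrightarrow>
      lt (fst a) (fst c) \<and> P (fst a) (fst c)"
    using t tr by auto
  show "\<not> (lt (fst a) (fst b) \<and> Q (fst a) (fst b)) \<Longrightarrow> lt (fst a) (fst c) \<and> Q (fst a) (fst c) \<Longrightarrow>
      lt (fst b) (fst c) \<and> Q (fst b) (fst c)"
    using t tr ab' bc' ir by auto
  show "lt (fst a) (fst b) \<and> P (fst a) (fst b) \<Longrightarrow> \<not> (lt (fst a) (fst c) \<and> P (fst a) (fst c)) \<Longrightarrow>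
      lt (fst b) (fst c) \<and> Q (fst b) (fst c)"
    using t tr ab' bc' ir by auto
  show "\<not> (lt (fst a) (fst b) \<and> P (fst a) (fst b)) \<Longrightarrow> \<not> (lt (fst a) (fst b) \<and> Q (fst a) (fst b)) \<Longrightarrow>
      \<not> (lt (fst a) (fst c) \<and> P (fst a) (fst c)) \<Longrightarrow> \<not> (lt (fst a) (fst c) \<and> Q (fst a) (fst c)) \<Longrightarrow>
      \<not> (lt (fst b) (fst c) \<and> P (fst b) (fst c))"
    using t tr ab' bc' ir by auto
qed


section \<open>The steps of a poset-type as appending letters\<close>

abbreviation extend_by :: "(word \<Rightarrow> letter) \<Rightarrow> word set \<Rightarrow> word set" where
  "extend_by c A \<equiv> (\<lambda>z. z @ [c z]) ` A"

lemma snoc_in_extend_by: "z \<in> A \<Longrightarrow> c z = a \<Longrightarrow> z @ [a] \<in> extend_by c A"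
  by auto

definition branch_letter :: "word \<Rightarrow> word \<Rightarrow> letter" where
  "branch_letter w z = (if lex_less z w then X else R)"

lemma branch_letter_not_L: "branch_letter w z \<noteq> L"
  by (simp add: branch_letter_def)

lemma branch_children_eq:
  assumes "w \<in> A"
  shows "app {z \<in> A. lex_less z w} X \<union> {w @ [X], w @ [R]} \<union> app {z \<in> A. lex_less w z} R =
    insert (w @ [X]) (extend_by (branch_letter w) A)" (is "?lhs = ?rhs")
proof (intro set_eqI iffI)
  fix x assume "x \<in> ?lhs"
  then show "x \<in> ?rhs"
    using assms lex_less_asym
    unfolding app_def by (auto intro!: snoc_in_extend_by simp: branch_letter_def)
next
  fix x assume "x \<in> ?rhs"
  then consider "x = w @ [X]" | z where "z \<in> A" "x = z @ [branch_letter w z]" by auto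
  then show "x \<in> ?lhs"
  proof cases
    case (2 z)
    then show ?thesis
      using lex_less_trichotomy[of z w] unfolding app_def branch_letter_def by auto
  qed simp
qed

lemma perp_children_eq:
  assumes "v \<in> A" "w \<in> A" "lex_less v w"
  shows "app {z \<in> A. lex_less z v} X \<union> {v @ [R]}
      \<union> app {z \<in> A. lex_less v z \<and> lex_less z w \<and> perp z v} X
      \<union> app {z \<in> A. lex_less v z \<and> lex_less z w \<and> \<not> perp z v} R
      \<union> {w @ [X]} \<union> app {z \<in> A. lex_less w z} R =
    extend_by (new_perp_letter lex_less perp v w) A" (is "?lhs = ?rhs")
proof (intro set_eqI iffI)
  fix x assume "x \<in> ?lhs"
  then show "x \<in> ?rhs"
    unfolding app_def
  proof (elim UnE imageE CollectE conjE insertE emptyE)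
    fix z assume "z \<in> A" "lex_less z v" "x = z @ [X]"
    then show ?thesis by (auto intro!: snoc_in_extend_by simp: new_perp_letter_def)
  next
    assume "x = v @ [R]"
    then show ?thesis using assms by (auto intro!: snoc_in_extend_by simp: new_perp_letter_def)
  next
    fix z assume "z \<in> A" "lex_less v z" "lex_less z w" "perp z v" "x = z @ [X]"
    then show ?thesis using lex_less_asym[of v z] perp_sym[of z v]
      by (auto intro!: snoc_in_extend_by simp: new_perp_letter_def)
  next
    fix z assume "z \<in> A" "lex_less v z" "lex_less z w" "\<not> perp z v" "x = z @ [R]"
    then show ?thesis using lex_less_asym[of v z] perp_sym[of z v]
      by (auto intro!: snoc_in_extend_by simp: new_perp_letter_def)
  next
    assume "x = w @ [X]"
    then show ?thesis using assms lex_less_asym[of v w]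
      by (auto intro!: snoc_in_extend_by simp: new_perp_letter_def)
  next
    fix z assume "z \<in> A" "lex_less w z" "x = z @ [R]"
    then show ?thesis
      using assms lex_less_asym[of w z] lex_less_asym[of v z] lex_less_trans[of v w z]
      by (auto intro!: snoc_in_extend_by simp: new_perp_letter_def)
  qed
next
  fix x assume "x \<in> ?rhs"
  then obtain z where "z \<in> A" "x = z @ [new_perp_letter lex_less perp v w z]" by auto
  then show "x \<in> ?lhs"
    using assms lex_less_trichotomy[of z v] lex_less_trichotomy[of z w] lex_less_asym[of v w]
      perp_sym[of z v]
    unfolding app_def new_perp_letter_def by auto
qed

lemma prec_children_eq:
  assumes "v \<in> A" "w \<in> A" "lex_less v w"
  shows "app {z \<in> A. lex_less z v \<and> perp z v} X \<union> app {z \<in> A. lex_less z v \<and> \<not> perp z v} L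
      \<union> {v @ [L]} \<union> app {z \<in> A. lex_less v z \<and> lex_less z w} X \<union> {w @ [R]}
      \<union> app {z \<in> A. lex_less w z \<and> perp w z} X \<union> app {z \<in> A. lex_less w z \<and> \<not> perp w z} R =
    extend_by (new_prec_letter lex_less perp v w) A" (is "?lhs = ?rhs")
proof (intro set_eqI iffI)
  fix x assume "x \<in> ?lhs"
  then show "x \<in> ?rhs"
    unfolding app_def
  proof (elim UnE imageE CollectE conjE insertE emptyE)
    fix z assume "z \<in> A" "lex_less z v" "perp z v" "x = z @ [X]"
    then show ?thesis by (auto intro!: snoc_in_extend_by simp: new_prec_letter_def)
  next
    fix z assume "z \<in> A" "lex_less z v" "\<not> perp z v" "x = z @ [L]"
    then show ?thesis by (auto intro!: snoc_in_extend_by simp: new_prec_letter_def)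
  next
    assume "x = v @ [L]"
    then show ?thesis using assms by (auto intro!: snoc_in_extend_by simp: new_prec_letter_def)
  next
    fix z assume "z \<in> A" "lex_less v z" "lex_less z w" "x = z @ [X]"
    then show ?thesis using lex_less_asym[of v z]
      by (auto intro!: snoc_in_extend_by simp: new_prec_letter_def)
  next
    assume "x = w @ [R]"
    then show ?thesis using assms lex_less_asym[of v w]
      by (auto intro!: snoc_in_extend_by simp: new_prec_letter_def)
  next
    fix z assume "z \<in> A" "lex_less w z" "perp w z" "x = z @ [X]"
    then show ?thesis
      using assms lex_less_asym[of w z] lex_less_asym[of v z] lex_less_trans[of v w z]
      by (auto intro!: snoc_in_extend_by simp: new_prec_letter_def)
  next
    fix z assume "z \<in> A" "lex_less w z" "\<not> perp w z" "x = z @ [R]"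
    then show ?thesis
      using assms lex_less_asym[of w z] lex_less_asym[of v z] lex_less_trans[of v w z]
      by (auto intro!: snoc_in_extend_by simp: new_prec_letter_def)
  qed
next
  fix x assume "x \<in> ?rhs"
  then obtain z where "z \<in> A" "x = z @ [new_prec_letter lex_less perp v w z]" by auto
  then show "x \<in> ?lhs"
    using assms lex_less_trichotomy[of z v] lex_less_trichotomy[of z w] lex_less_asym[of v w]
    unfolding app_def new_prec_letter_def by auto
qed

lemma branch_step_iff:
  "branch_step S i \<longleftrightarrow>
    (\<exists>w\<in>level S i. level S (Suc i) = insert (w @ [X]) (extend_by (branch_letter w) (level S i)))"
  unfolding branch_step_def by (intro bex_cong refl) (simp only: branch_children_eq)

lemma perp_step_iff:
  "perp_step S i \<longleftrightarrow> (\<exists>v\<in>level S i. \<exists>w\<in>level S i. unrelated v w \<and> lex_less v w \<and>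
    level S (Suc i) = extend_by (new_perp_letter lex_less perp v w) (level S i) \<and>
    (\<forall>u\<in>level S i. lex_less v u \<and> lex_less u w \<longrightarrow> perp u v \<or> perp u w))"
  unfolding perp_step_def by (intro bex_cong refl) (simp only: perp_children_eq cong: conj_cong)

lemma prec_step_iff:
  "prec_step S i \<longleftrightarrow> (\<exists>v\<in>level S i. \<exists>w\<in>level S i. unrelated v w \<and> lex_less v w \<and>
    level S (Suc i) = extend_by (new_prec_letter lex_less perp v w) (level S i) \<and>
    (\<forall>u\<in>level S i. lex_less u v \<longrightarrow> preceq u w \<or> perp u v) \<and>
    (\<forall>u\<in>level S i. lex_less w u \<longrightarrow> preceq v u \<or> perp w u))"
  unfolding prec_step_def by (intro bex_cong refl) (simp only: prec_children_eq cong: conj_cong)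

lemma poset_type_step:
  assumes "poset_type S" "\<exists>w\<in>S. i < length w"
  shows "leaf_step S i \<or> branch_step S i \<or> perp_step S i \<or> prec_step S i"
proof -
  have "length (filter id [leaf_step S i, branch_step S i, perp_step S i, prec_step S i]) = 1"
    using assms unfolding poset_type_def by blast
  then show ?thesis by (auto split: if_splits)
qed


section \<open>The configurations on the levels of a poset-type\<close>

abbreviation word_level_axioms :: "word set \<Rightarrow> bool" where
  "word_level_axioms A \<equiv> level_axioms A lex_less prec perp"

lemma word_level_axioms_monotone_children:
  assumes len: "\<And>a. a \<in> A \<Longrightarrow> length a = n" and ax: "word_level_axioms A"
    and B: "B \<subseteq> A \<times> UNIV" and not_L: "\<And>p. p \<in> B \<Longrightarrow> snd p \<noteq> L"
    and mono: "\<And>p q. p \<in> B \<Longrightarrow> q \<in> B \<Longrightarrow> lex_less (fst p) (fst q) \<Longrightarrow> \<not> let_less (snd q) (snd p)"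
  shows "word_level_axioms ((\<lambda>p. fst p @ [snd p]) ` B)"
proof (rule level_axioms_transfer[OF level_axioms_pairs[OF ax strict_linear_on_lex_less B]
      strict_linear_on_snoc_less[OF strict_linear_on_lex_less B]])
  fix p q assume p: "p \<in> B" and q: "q \<in> B"
  then have pA: "fst p \<in> A" and qA: "fst q \<in> A" using B by auto
  then have len: "length (fst p) = length (fst q)" using len by simp
  show "lex_less (fst p @ [snd p]) (fst q @ [snd q]) \<longleftrightarrow> snoc_less lex_less p q"
    using lex_less_snoc[OF len] unfolding snoc_less_def by auto
  assume pq: "snoc_less lex_less p q"
  show "(prec (fst p @ [snd p]) (fst q @ [snd q]) \<longleftrightarrow>
        lex_less (fst p) (fst q) \<and> prec (fst p) (fst q)) \<and>
      (prec (fst q @ [snd q]) (fst p @ [snd p]) \<longleftrightarrow> lex_less (fst q) (fst p) \<and> prec (fst q) (fst p)) \<and>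
      (perp (fst p @ [snd p]) (fst q @ [snd q]) \<longleftrightarrow> lex_less (fst p) (fst q) \<and> perp (fst p) (fst q))"
  proof (cases "fst p = fst q")
    case True
    then show ?thesis
      using not_L[OF p] not_L[OF q] by (simp add: snoc_same_prefix)
  next
    case False
    then have pq': "lex_less (fst p) (fst q)" using pq unfolding snoc_less_def by auto
    moreover have "\<not> prec (fst q) (fst p)"
      using level_axioms_pair[OF ax pA qA] pq' by simp
    ultimately show ?thesis
      using snoc_lex_ordered[OF len pq' \<open>\<not> prec (fst q) (fst p)\<close>, where x = "snd p" and y = "snd q"]
        lex_less_asym[OF pq'] not_L[OF p] mono[OF p q pq'] by auto
  qed
qed

lemma word_level_axioms_leaf:
  assumes "\<And>a. a \<in> A \<Longrightarrow> length a = n" "word_level_axioms A"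
  shows "word_level_axioms (app (A - {w}) X)"
proof -
  have "app (A - {w}) X = (\<lambda>p. fst p @ [snd p]) ` ((A - {w}) \<times> {X})"
    unfolding app_def by force
  also have "word_level_axioms \<dots>"
    by (rule word_level_axioms_monotone_children[OF assms]) auto
  finally show ?thesis .
qed

lemma word_level_axioms_branch:
  assumes "\<And>a. a \<in> A \<Longrightarrow> length a = n" "word_level_axioms A" and w: "w \<in> A"
  shows "word_level_axioms (insert (w @ [X]) (extend_by (branch_letter w) A))"
proof -
  let ?B = "insert (w, X) ((\<lambda>z. (z, branch_letter w z)) ` A)"
  have "insert (w @ [X]) (extend_by (branch_letter w) A) = (\<lambda>p. fst p @ [snd p]) ` ?B"
    by (simp add: image_image)
  also have "word_level_axioms \<dots>"
  proof (rule word_level_axioms_monotone_children[OF assms(1,2)])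
    show "?B \<subseteq> A \<times> UNIV" using w by auto
    show "snd p \<noteq> L" if "p \<in> ?B" for p
      using that branch_letter_not_L[of w] by force
    show "\<not> let_less (snd q) (snd p)" if "p \<in> ?B" "q \<in> ?B" "lex_less (fst p) (fst q)" for p q
      using that lex_less_trans[of w "fst p" "fst q"] lex_less_asym[of w "fst q"]
        lex_less_trichotomy[of "fst p" w]
      unfolding branch_letter_def by (auto simp: let_less_def split: if_splits)
  qed
  finally show ?thesis .
qed

lemma word_level_axioms_new_perp:
  assumes len: "\<And>a. a \<in> A \<Longrightarrow> length a = n" and "new_perp_pair A lex_less prec perp v w"
  shows "word_level_axioms (extend_by (new_perp_letter lex_less perp v w) A)"
proof -
  interpret new_perp_pair A lex_less prec perp v w by fact
  let ?c = "new_perp_letter lex_less perp v w"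
  show ?thesis
  proof (rule level_axioms_transfer[OF level_axioms_add_perp linear])
    fix x y assume x: "x \<in> A" and y: "y \<in> A"
    then have len: "length x = length y" using len by auto
    show "lex_less (x @ [?c x]) (y @ [?c y]) \<longleftrightarrow> lex_less x y"
      using lex_less_snoc[OF len] by auto
    assume xy: "lex_less x y"
    have "\<not> prec y x" using level_axioms_pair[OF axioms x y] xy by auto
    note snoc = snoc_lex_ordered[OF len xy this, where x = "?c x" and y = "?c y"]
    show "(prec (x @ [?c x]) (y @ [?c y]) \<longleftrightarrow> lex_less x y \<and> prec x y) \<and>
        (prec (y @ [?c y]) (x @ [?c x]) \<longleftrightarrow> lex_less y x \<and> prec y x) \<and>
        (perp (x @ [?c x]) (y @ [?c y]) \<longleftrightarrow> lex_less x y \<and> (perp x y \<or> x = v \<and> y = w))"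
      using snoc new_perp_letter_creates_only_vw[OF x y xy]
        new_perp_letter_not_L[of lex_less perp v w] lex_less_asym[OF xy] xy by auto
  qed
qed

lemma word_level_axioms_new_prec:
  assumes len: "\<And>a. a \<in> A \<Longrightarrow> length a = n" and "new_prec_pair A lex_less prec perp v w"
  shows "word_level_axioms (extend_by (new_prec_letter lex_less perp v w) A)"
proof -
  interpret new_prec_pair A lex_less prec perp v w by fact
  let ?c = "new_prec_letter lex_less perp v w"
  show ?thesis
  proof (rule level_axioms_transfer[OF level_axioms_add_prec linear])
    fix x y assume x: "x \<in> A" and y: "y \<in> A"
    then have len: "length x = length y" using len by auto
    show "lex_less (x @ [?c x]) (y @ [?c y]) \<longleftrightarrow> lex_less x y"
      using lex_less_snoc[OF len] by auto
    assume xy: "lex_less x y"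
    have "\<not> prec y x" using level_axioms_pair[OF axioms x y] xy by auto
    note snoc = snoc_lex_ordered[OF len xy this, where x = "?c x" and y = "?c y"]
    show "(prec (x @ [?c x]) (y @ [?c y]) \<longleftrightarrow> lex_less x y \<and> (prec x y \<or> x = v \<and> y = w)) \<and>
        (prec (y @ [?c y]) (x @ [?c x]) \<longleftrightarrow> lex_less y x \<and> (prec y x \<or> y = v \<and> x = w)) \<and>
        (perp (x @ [?c x]) (y @ [?c y]) \<longleftrightarrow> lex_less x y \<and> perp x y)"
      using snoc new_prec_letter_creates_only_vw[OF x y xy]
        new_prec_letter_no_new_Q[OF x y xy] lex_less_asym[OF xy] xy by auto
  qed
qed

lemma unrelatedD: "unrelated v w \<Longrightarrow> \<not> prec v w \<and> \<not> perp v w \<and> \<not> prec w v"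
  unfolding unrelated_def related_def preceq_def by auto

lemma new_perp_pairI:
  assumes "word_level_axioms A" "v \<in> A" "w \<in> A" "unrelated v w" "lex_less v w"
    and "\<forall>u\<in>A. lex_less v u \<and> lex_less u w \<longrightarrow> perp u v \<or> perp u w"
  shows "new_perp_pair A lex_less prec perp v w"
  by unfold_locales (use assms strict_linear_on_lex_less unrelatedD perp_sym in auto)

lemma new_prec_pairI:
  assumes "word_level_axioms A" "v \<in> A" "w \<in> A" "unrelated v w" "lex_less v w"
    and below: "\<forall>u\<in>A. lex_less u v \<longrightarrow> preceq u w \<or> perp u v"
    and above: "\<forall>u\<in>A. lex_less w u \<longrightarrow> preceq v u \<or> perp w u"
  shows "new_prec_pair A lex_less prec perp v w"
proof unfold_locales
  show "prec u w \<or> perp u v" if "u \<in> A" "lex_less u v" for u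
    using below that lex_less_trans[OF \<open>lex_less u v\<close> \<open>lex_less v w\<close>] unfolding preceq_def by auto
  show "prec v u \<or> perp w u" if "u \<in> A" "lex_less w u" for u
    using above that lex_less_trans[OF \<open>lex_less v w\<close> \<open>lex_less w u\<close>] unfolding preceq_def by auto
qed (use assms strict_linear_on_lex_less unrelatedD in auto)

lemma word_level_axioms_Suc:
  assumes ax: "word_level_axioms (level S i)"
    and step: "leaf_step S i \<or> branch_step S i \<or> perp_step S i \<or> prec_step S i"
  shows "word_level_axioms (level S (Suc i))"
proof -
  have len: "\<And>a. a \<in> level S i \<Longrightarrow> length a = i" by (simp add: level_def)
  from step consider "leaf_step S i" | "branch_step S i" | "perp_step S i" | "prec_step S i"
    by blast
  then show ?thesis
  proof cases
    case 1
    then obtain w where "level S (Suc i) = app (level S i - {w}) X"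
      unfolding leaf_step_def by blast
    then show ?thesis using word_level_axioms_leaf[OF len ax] by simp
  next
    case 2
    then obtain w where "w \<in> level S i"
      and "level S (Suc i) = insert (w @ [X]) (extend_by (branch_letter w) (level S i))"
      unfolding branch_step_iff by blast
    then show ?thesis using word_level_axioms_branch[OF len ax] by simp
  next
    case 3
    then obtain v w where "v \<in> level S i" "w \<in> level S i" "unrelated v w" "lex_less v w"
      and "level S (Suc i) = extend_by (new_perp_letter lex_less perp v w) (level S i)"
      and "\<forall>u\<in>level S i. lex_less v u \<and> lex_less u w \<longrightarrow> perp u v \<or> perp u w"
      unfolding perp_step_iff by blast
    then show ?thesis
      using word_level_axioms_new_perp[OF len new_perp_pairI[OF ax]] by simp
  next
    case 4
    then obtain v w where "v \<in> level S i" "w \<in> level S i" "unrelated v w" "lex_less v w"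
      and "level S (Suc i) = extend_by (new_prec_letter lex_less perp v w) (level S i)"
      and "\<forall>u\<in>level S i. lex_less u v \<longrightarrow> preceq u w \<or> perp u v"
      and "\<forall>u\<in>level S i. lex_less w u \<longrightarrow> preceq v u \<or> perp w u"
      unfolding prec_step_iff by blast
    then show ?thesis
      using word_level_axioms_new_prec[OF len new_prec_pairI[OF ax]] by simp
  qed
qed

lemma word_level_axioms_level:
  assumes poset: "poset_type S"
  shows "word_level_axioms (level S i)"
proof (induction i)
  case 0
  have "word_level_axioms {[]}" by (intro level_axiomsI) auto
  moreover have "level S 0 \<subseteq> {[]}" unfolding level_def by auto
  ultimately show ?case by (rule level_axioms_subset)
next
  case (Suc i)
  show ?case
  proof (cases "\<exists>w\<in>S. i < length w")
    case True
    then show ?thesis using word_level_axioms_Suc[OF Suc.IH poset_type_step[OF poset]] by blast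
  next
    case False
    then have "level S (Suc i) = {}" unfolding level_def by auto
    then show ?thesis by (simp add: level_axioms_def)
  qed
qed


section \<open>Closed sets of words\<close>

lemma closure_take: "w \<in> closure A \<Longrightarrow> i \<le> length w \<Longrightarrow> take i w \<in> closure A"
proof -
  assume "w \<in> closure A" "i \<le> length w"
  then obtain s k where s: "s \<in> A" "k \<le> length s" "w = take k s" unfolding closure_def by auto
  then have "i \<le> k" using \<open>i \<le> length w\<close> by simp
  then have "take i w = take i s" "i \<le> length s" using s by (auto simp: min_def)
  then show ?thesis using s unfolding closure_def by blast
qed

lemma subset_closure: "A \<subseteq> closure A"
  unfolding closure_def by force

lemma closure_closure [simp]: "closure (closure A) = closure A"
proof
  show "closure (closure A) \<subseteq> closure A"
    using closure_take unfolding closure_def[of "closure A"] by blast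
qed (rule subset_closure)

lemma closure_mono: "A \<subseteq> B \<Longrightarrow> closure A \<subseteq> closure B"
  unfolding closure_def by blast

lemma closure_snoc_child: "z \<in> closure A \<Longrightarrow> z \<notin> A \<Longrightarrow> \<exists>c. z @ [c] \<in> closure A"
proof -
  assume "z \<in> closure A" "z \<notin> A"
  then obtain s i where s: "s \<in> A" "i \<le> length s" "z = take i s" unfolding closure_def by auto
  then have "i < length s" using \<open>z \<notin> A\<close> by (cases "i = length s") auto
  then have "z @ [s ! i] = take (Suc i) s" using s by (simp add: take_Suc_conv_app_nth)
  moreover have "take (Suc i) s \<in> closure A" using s \<open>i < length s\<close> unfolding closure_def by force
  ultimately show ?thesis by metis
qed

lemma level_Suc_snoc:
  assumes "closure C = C" "x \<in> level C (Suc j)"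
  obtains z c where "x = z @ [c]" "z \<in> level C j"
proof -
  have x: "length x = Suc j" "x \<in> C" using assms(2) unfolding level_def by auto
  then obtain z c where "x = z @ [c]" by (cases x rule: rev_exhaust) auto
  moreover have "take j x \<in> C" using closure_take[of x C j] assms(1) x by auto
  ultimately show ?thesis using that x unfolding level_def by auto
qed

lemma finite_level:
  assumes "closure C = C"
  shows "finite (level C j)"
proof (induction j)
  case 0
  have "level C 0 \<subseteq> {[]}" unfolding level_def by auto
  then show ?case using finite_subset by blast
next
  case (Suc j)
  have "level C (Suc j) \<subseteq> (\<lambda>p. fst p @ [snd p]) ` (level C j \<times> UNIV)"
  proof
    fix x assume "x \<in> level C (Suc j)"
    then obtain z c where "x = z @ [c]" "z \<in> level C j" by (rule level_Suc_snoc[OF assms])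
    then show "x \<in> (\<lambda>p. fst p @ [snd p]) ` (level C j \<times> UNIV)" by force
  qed
  moreover have "finite (UNIV :: letter set)"
    by (rule finite_subset[of _ "{L, X, R}"]) (use letter.exhaust in auto)
  ultimately show ?case using Suc finite_subset by blast
qed


section \<open>Levels at which nothing changes\<close>

definition same_relations :: "word \<Rightarrow> word \<Rightarrow> word \<Rightarrow> word \<Rightarrow> bool" where
  "same_relations x y x' y' \<longleftrightarrow> (x' = y' \<longleftrightarrow> x = y) \<and> (lex_le x' y' \<longleftrightarrow> lex_le x y) \<and>
    (prec x' y' \<longleftrightarrow> prec x y) \<and> (perp x' y' \<longleftrightarrow> perp x y)"

definition preserves_relations :: "word set \<Rightarrow> (word \<Rightarrow> word) \<Rightarrow> bool" where
  "preserves_relations A f \<longleftrightarrow> (\<forall>x\<in>A. \<forall>y\<in>A. same_relations x y (f x) (f y))"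

lemma compatible_sym: "compatible x y \<longleftrightarrow> compatible y x"
  unfolding compatible_def lex_le_iff_less_or_eq
  using lex_less_trichotomy[of x y] lex_less_asym[of x y] by auto

lemma harmless_letters_same_relations:
  assumes len: "\<And>a. a \<in> A \<Longrightarrow> length a = n" and ax: "word_level_axioms A"
    and harmless: "harmless_letters A lex_less prec perp c" and x: "x \<in> A" and y: "y \<in> A"
  shows "same_relations x y (x @ [c x]) (y @ [c y]) \<and>
    (compatible (x @ [c x]) (y @ [c y]) \<longleftrightarrow> compatible x y)"
proof -
  have ordered: "same_relations a b (a @ [c a]) (b @ [c b]) \<and>
      same_relations b a (b @ [c b]) (a @ [c a]) \<and>
      (compatible (a @ [c a]) (b @ [c b]) \<longleftrightarrow> compatible a b)"
    if a: "a \<in> A" and b: "b \<in> A" and ab: "lex_less a b" for a b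
  proof -
    have lab: "length a = length b" using len a b by simp
    have nprec: "\<not> prec b a" using level_axioms_pair[OF ax a b] ab by simp
    note snoc = snoc_lex_ordered[OF lab ab nprec, where x = "c a" and y = "c b"]
    have h: "\<not> (c a = R \<and> c b = L)" "let_less (c b) (c a) \<longrightarrow> perp a b"
      "c a = L \<and> c b = R \<longrightarrow> prec a b \<and> \<not> perp a b"
      using harmless a b ab unfolding harmless_letters_def by auto
    have prec_eq: "prec (a @ [c a]) (b @ [c b]) \<longleftrightarrow> prec a b" using snoc(2) h(3) by auto
    have perp_eq: "perp (a @ [c a]) (b @ [c b]) \<longleftrightarrow> perp a b" using snoc(4) h(2) by auto
    have compat: "compat_ord (a @ [c a]) (b @ [c b]) \<longleftrightarrow> compat_ord a b"
      unfolding compat_ord_iff_RL_clash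
      using RL_clash_snoc[OF lab] RL_clash_snoc[of b a] lab h prec_eq perp_eq by auto
    show ?thesis
      using ab prec_eq perp_eq snoc(1,3) compat nprec lex_less_asym[OF ab] lex_less_asym[OF snoc(1)]
        perp_sym[of a b] perp_sym[of "a @ [c a]" "b @ [c b]"]
      unfolding same_relations_def compatible_def lex_le_iff_less_or_eq by auto
  qed
  consider "lex_less x y" | "x = y" | "lex_less y x" using lex_less_trichotomy by blast
  then show ?thesis
  proof cases
    case 1
    then show ?thesis using ordered[OF x y] by blast
  next
    case 2
    then show ?thesis by (simp add: same_relations_def compatible_def)
  next
    case 3
    then show ?thesis using ordered[OF y x] compatible_sym by blast
  qed
qed

definition neutral_step :: "word set \<Rightarrow> nat \<Rightarrow> bool" where
  "neutral_step C j \<longleftrightarrow> (\<exists>c. level C (Suc j) = extend_by c (level C j) \<and>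
    preserves_relations (level C j) (\<lambda>z. z @ [c z]) \<and>
    (\<forall>x\<in>level C j. \<forall>y\<in>level C j. compatible (x @ [c x]) (y @ [c y]) \<longleftrightarrow> compatible x y))"

lemma neutral_stepI:
  assumes "word_level_axioms (level C j)" "harmless_letters (level C j) lex_less prec perp c"
    and "level C (Suc j) = extend_by c (level C j)"
  shows "neutral_step C j"
  unfolding neutral_step_def preserves_relations_def
  using harmless_letters_same_relations[OF _ assms(1,2), of j] assms(3)
  by (intro exI[of _ c]) (simp add: level_def)

lemma neutral_step_not_interesting:
  assumes closed: "closure C = C" and "neutral_step C j"
  shows "j \<notin> interesting C"
proof -
  obtain c where eq: "level C (Suc j) = extend_by c (level C j)"
    and rel: "preserves_relations (level C j) (\<lambda>z. z @ [c z])"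
    and compat: "\<forall>x\<in>level C j. \<forall>y\<in>level C j. compatible (x @ [c x]) (y @ [c y]) \<longleftrightarrow> compatible x y"
    using assms(2) unfolding neutral_step_def by blast
  have "bij_betw (\<lambda>z. z @ [c z]) (level C j) (level C (Suc j))"
    unfolding eq by (rule inj_on_imp_bij_betw) (auto simp: inj_on_def)
  then have "isomorphic_level (level C j) (level C (Suc j))"
    using rel unfolding isomorphic_level_def preserves_relations_def same_relations_def preceq_def
    by blast
  moreover have "compatible u v \<longleftrightarrow> compatible (take j u) (take j v)"
    if "u \<in> level C (Suc j)" "v \<in> level C (Suc j)" for u v
    using that compat unfolding eq by (auto simp: level_def)
  ultimately show ?thesis
    unfolding interesting_def closed by blast
qed

lemma lex_monotone_bij_id:
  assumes fin: "finite A" and bij: "bij_betw h A A"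
    and mono: "\<And>x y. x \<in> A \<Longrightarrow> y \<in> A \<Longrightarrow> lex_le x y \<Longrightarrow> lex_le (h x) (h y)"
    and x: "x \<in> A"
  shows "h x = x"
proof -
  define rank where "rank x = card {y\<in>A. lex_less y x}" for x
  have rank_less: "rank y < rank x" if "x \<in> A" "lex_less y x" "y \<in> A" for x y
  proof -
    have "{z\<in>A. lex_less z y} \<subseteq> {z\<in>A. lex_less z x}"
      using that lex_less_trans[of _ y x] by auto
    moreover have "y \<in> {z\<in>A. lex_less z x} - {z\<in>A. lex_less z y}" using that by simp
    ultimately have "{z\<in>A. lex_less z y} \<subset> {z\<in>A. lex_less z x}" by blast
    then show ?thesis unfolding rank_def using fin by (simp add: psubset_card_mono)
  qed
  have "h x = x" if "x \<in> A" "rank x = r" for x r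
    using that
  proof (induction r arbitrary: x rule: less_induct)
    case (less r)
    have IH: "h y = y" if "y \<in> A" "lex_less y x" for y
      using less rank_less that by blast
    have hx: "h x \<in> A" using bij less.prems(1) by (simp add: bij_betw_apply)
    consider "lex_less (h x) x" | "h x = x" | "lex_less x (h x)" using lex_less_trichotomy by blast
    then show "h x = x"
    proof cases
      case 1
      then have "h (h x) = h x" using IH hx by simp
      then show ?thesis using bij hx less.prems(1) unfolding bij_betw_def inj_on_def by blast
    next
      case 3
      obtain z where z: "z \<in> A" "h z = x" using bij less.prems(1) by (metis bij_betw_iff_bijections)
      consider "lex_less z x" | "z = x" | "lex_less x z" using lex_less_trichotomy by blast
      then show ?thesis
      proof cases
        case 1
        then show ?thesis using IH z by simp
      next
        case 3
        then have "lex_le (h x) x"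
          using mono[OF less.prems(1) z(1)] z(2) by (simp add: lex_le_iff_less_or_eq)
        then show ?thesis
          using \<open>lex_less x (h x)\<close> lex_less_asym by (auto simp: lex_le_iff_less_or_eq)
      qed (use z in simp)
    qed
  qed
  then show ?thesis using x by blast
qed


section \<open>Telling the four steps apart\<close>

lemma card_extend_by [simp]: "card (extend_by c A) = card A"
  by (rule card_image) (auto simp: inj_on_def)

lemma leaf_step_card:
  assumes "finite (level Q k)" "leaf_step Q k"
  shows "card (level Q (Suc k)) < card (level Q k)"
proof -
  obtain w where w: "w \<in> level Q k" and eq: "level Q (Suc k) = app (level Q k - {w}) X"
    using assms(2) unfolding leaf_step_def by blast
  have "card (level Q (Suc k)) = card (level Q k - {w})"
    unfolding eq app_def by (rule card_image) (auto simp: inj_on_def)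
  also have "\<dots> < card (level Q k)" using assms(1) w by (rule card_Diff1_less)
  finally show ?thesis .
qed

lemma branch_step_card:
  assumes "finite (level Q k)" "branch_step Q k"
  shows "card (level Q (Suc k)) = Suc (card (level Q k))"
proof -
  obtain w where "w \<in> level Q k"
    and eq: "level Q (Suc k) = insert (w @ [X]) (extend_by (branch_letter w) (level Q k))"
    using assms(2) unfolding branch_step_iff by blast
  moreover have "w @ [X] \<notin> extend_by (branch_letter w) (level Q k)"
    by (auto simp: branch_letter_def)
  ultimately show ?thesis using assms(1) by simp
qed

lemma perp_step_card:
  assumes "perp_step Q k"
  shows "card (level Q (Suc k)) = card (level Q k) \<and> (\<forall>z. z @ [L] \<notin> level Q (Suc k))"
proof -
  obtain v w where "level Q (Suc k) = extend_by (new_perp_letter lex_less perp v w) (level Q k)"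
    using assms unfolding perp_step_iff by blast
  moreover have "L \<noteq> new_perp_letter lex_less perp v w z" for z
    using new_perp_letter_not_L[of lex_less perp v w z] by simp
  ultimately show ?thesis by auto
qed

lemma prec_step_card:
  assumes "prec_step Q k"
  shows "card (level Q (Suc k)) = card (level Q k) \<and> (\<exists>z. z @ [L] \<in> level Q (Suc k))"
proof -
  obtain v w where "v \<in> level Q k" "lex_less v w"
    and eq: "level Q (Suc k) = extend_by (new_prec_letter lex_less perp v w) (level Q k)"
    using assms unfolding prec_step_iff by blast
  then have "v @ [L] \<in> level Q (Suc k)" by (auto simp: new_prec_letter_def)
  then show ?thesis using eq by auto
qed

lemma exactly_one_of_four:
  "a \<or> b \<or> c \<or> d \<Longrightarrow> \<not> (a \<and> b) \<Longrightarrow> \<not> (a \<and> c) \<Longrightarrow> \<not> (a \<and> d) \<Longrightarrow> \<not> (b \<and> c) \<Longrightarrow>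
    \<not> (b \<and> d) \<Longrightarrow> \<not> (c \<and> d) \<Longrightarrow> length (filter id [a, b, c, d]) = 1"
  by (cases a; cases b; cases c; cases d) auto

lemma poset_typeI:
  assumes closed: "closure Q = Q"
    and step: "\<And>k. \<exists>w\<in>Q. k < length w \<Longrightarrow>
      leaf_step Q k \<or> branch_step Q k \<or> perp_step Q k \<or> prec_step Q k"
  shows "poset_type Q"
  unfolding poset_type_def
proof (intro conjI allI impI)
  show "Q = closure Q" using closed ..
  fix k assume "\<exists>w\<in>Q. k < length w"
  have fin: "finite (level Q k)" using finite_level[OF closed] .
  note leaf = leaf_step_card[OF fin] and branch = branch_step_card[OF fin]
  show "length (filter id [leaf_step Q k, branch_step Q k, perp_step Q k, prec_step Q k]) = 1"
  proof (rule exactly_one_of_four)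
    show "\<not> (leaf_step Q k \<and> branch_step Q k)" using leaf branch by fastforce
    show "\<not> (leaf_step Q k \<and> perp_step Q k)" using leaf perp_step_card by fastforce
    show "\<not> (leaf_step Q k \<and> prec_step Q k)" using leaf prec_step_card by fastforce
    show "\<not> (branch_step Q k \<and> perp_step Q k)" using branch perp_step_card by fastforce
    show "\<not> (branch_step Q k \<and> prec_step Q k)" using branch prec_step_card by fastforce
    show "\<not> (perp_step Q k \<and> prec_step Q k)" using perp_step_card prec_step_card by blast
  qed (rule step[OF \<open>\<exists>w\<in>Q. k < length w\<close>])
qed


section \<open>Transferring steps along a structure-preserving map\<close>

lemma image_extend_by:
  assumes "\<And>z. z \<in> A \<Longrightarrow> f (z @ [c z]) = f z @ [c' (f z)]"
  shows "f ` extend_by c A = extend_by c' (f ` A)"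
  using assms by (force simp: image_image)

locale level_map =
  fixes A B :: "word set" and i k :: nat and f :: "word \<Rightarrow> word"
  assumes level_eq: "level B k = f ` level A i"
    and level_Suc_eq: "level B (Suc k) = f ` level A (Suc i)"
    and snoc: "\<And>z c. z \<in> level A i \<Longrightarrow> f (z @ [c]) = f z @ [c]"
    and preserves: "preserves_relations (level A i) f"
begin

lemma relations:
  assumes "x \<in> level A i" "y \<in> level A i"
  shows "(f x = f y \<longleftrightarrow> x = y) \<and> (lex_less (f x) (f y) \<longleftrightarrow> lex_less x y) \<and>
    (prec (f x) (f y) \<longleftrightarrow> prec x y) \<and> (perp (f x) (f y) \<longleftrightarrow> perp x y) \<and>
    (preceq (f x) (f y) \<longleftrightarrow> preceq x y) \<and> (related (f x) (f y) \<longleftrightarrow> related x y) \<and>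
    (unrelated (f x) (f y) \<longleftrightarrow> unrelated x y)"
proof -
  have "same_relations x y (f x) (f y)" "same_relations y x (f y) (f x)"
    using preserves assms unfolding preserves_relations_def by auto
  then show ?thesis
    unfolding same_relations_def lex_less_def preceq_def related_def unrelated_def by auto
qed

lemma ball_level_eq: "(\<forall>u\<in>level B k. P u) \<longleftrightarrow> (\<forall>z\<in>level A i. P (f z))"
  unfolding level_eq by blast

lemma extend_by_eq:
  assumes "level A (Suc i) = extend_by c (level A i)"
    and "\<And>z. z \<in> level A i \<Longrightarrow> c' (f z) = c z"
  shows "level B (Suc k) = extend_by c' (level B k)"
  unfolding level_Suc_eq assms(1) level_eq using assms(2) snoc by (intro image_extend_by) simp

lemma inj: "inj_on f (level A i)"
  using relations unfolding inj_on_def by simp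

lemma leaf_step: "leaf_step A i \<Longrightarrow> leaf_step B k"
proof -
  assume "leaf_step A i"
  then obtain w where w: "w \<in> level A i" and rel: "\<forall>u\<in>level A i - {w}. related w u"
    and eq: "level A (Suc i) = app (level A i - {w}) X"
    unfolding leaf_step_def by blast
  have minus: "f ` (level A i - {w}) = level B k - {f w}"
    unfolding level_eq using inj_on_image_set_diff[OF inj, of "level A i" "{w}"] w by simp
  have "f ` app (level A i - {w}) X = app (f ` (level A i - {w})) X"
    unfolding app_def image_image using snoc by (intro image_cong) auto
  then have "level B (Suc k) = app (level B k - {f w}) X"
    unfolding level_Suc_eq eq minus .
  moreover have "related (f w) (f u)" if "u \<in> level A i - {w}" for u
    using rel that relations[OF w] by simp
  then have "\<forall>u\<in>level B k - {f w}. related (f w) u"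
    unfolding minus[symmetric] by blast
  ultimately show "leaf_step B k"
    unfolding leaf_step_def level_eq using w by blast
qed

lemma branch_step: "branch_step A i \<Longrightarrow> branch_step B k"
proof -
  assume "branch_step A i"
  then obtain w where w: "w \<in> level A i"
    and eq: "level A (Suc i) = insert (w @ [X]) (extend_by (branch_letter w) (level A i))"
    unfolding branch_step_iff by blast
  have "f ` extend_by (branch_letter w) (level A i) = extend_by (branch_letter (f w)) (level B k)"
    unfolding level_eq using snoc relations w
    by (intro image_extend_by) (simp add: branch_letter_def)
  then have "level B (Suc k) = insert (f w @ [X]) (extend_by (branch_letter (f w)) (level B k))"
    unfolding level_Suc_eq eq using snoc w by simp
  then show "branch_step B k"
    unfolding branch_step_iff level_eq using w by blast
qed

lemma perp_step: "perp_step A i \<Longrightarrow> perp_step B k"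
proof -
  assume "perp_step A i"
  then obtain v w where vw: "v \<in> level A i" "w \<in> level A i" "unrelated v w" "lex_less v w"
    and eq: "level A (Suc i) = extend_by (new_perp_letter lex_less perp v w) (level A i)"
    and between: "\<forall>u\<in>level A i. lex_less v u \<and> lex_less u w \<longrightarrow> perp u v \<or> perp u w"
    unfolding perp_step_iff by blast
  have "level B (Suc k) = extend_by (new_perp_letter lex_less perp (f v) (f w)) (level B k)"
    by (rule extend_by_eq[OF eq]) (use relations vw in \<open>simp add: new_perp_letter_def\<close>)
  moreover have "\<forall>u\<in>level B k. lex_less (f v) u \<and> lex_less u (f w) \<longrightarrow> perp u (f v) \<or> perp u (f w)"
    unfolding ball_level_eq using between relations vw by simp
  moreover have "f v \<in> level B k" "f w \<in> level B k" "unrelated (f v) (f w)" "lex_less (f v) (f w)"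
    using vw relations[OF vw(1,2)] unfolding level_eq by auto
  ultimately show "perp_step B k"
    unfolding perp_step_iff by blast
qed

lemma prec_step: "prec_step A i \<Longrightarrow> prec_step B k"
proof -
  assume "prec_step A i"
  then obtain v w where vw: "v \<in> level A i" "w \<in> level A i" "unrelated v w" "lex_less v w"
    and eq: "level A (Suc i) = extend_by (new_prec_letter lex_less perp v w) (level A i)"
    and below: "\<forall>u\<in>level A i. lex_less u v \<longrightarrow> preceq u w \<or> perp u v"
    and above: "\<forall>u\<in>level A i. lex_less w u \<longrightarrow> preceq v u \<or> perp w u"
    unfolding prec_step_iff by blast
  have "level B (Suc k) = extend_by (new_prec_letter lex_less perp (f v) (f w)) (level B k)"
    by (rule extend_by_eq[OF eq]) (use relations vw in \<open>simp add: new_prec_letter_def\<close>)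
  moreover have "\<forall>u\<in>level B k. lex_less u (f v) \<longrightarrow> preceq u (f w) \<or> perp u (f v)"
    unfolding ball_level_eq using below relations vw by simp
  moreover have "\<forall>u\<in>level B k. lex_less (f w) u \<longrightarrow> preceq (f v) u \<or> perp (f w) u"
    unfolding ball_level_eq using above relations vw by simp
  moreover have "f v \<in> level B k" "f w \<in> level B k" "unrelated (f v) (f w)" "lex_less (f v) (f w)"
    using vw relations[OF vw(1,2)] unfolding level_eq by auto
  ultimately show "prec_step B k"
    unfolding prec_step_iff by blast
qed

end


section \<open>Deleting the positions of the uninteresting levels\<close>

lemma same_relations_snoc:
  assumes len: "length x = length y" "length x' = length y'"
    and xy: "same_relations x y x' y'" and yx: "same_relations y x y' x'"
  shows "same_relations (x @ [a]) (y @ [b]) (x' @ [a]) (y' @ [b])"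
proof -
  have "lex_less x' y' \<longleftrightarrow> lex_less x y" "lex_less y' x' \<longleftrightarrow> lex_less y x"
    using xy yx unfolding same_relations_def lex_less_def by auto
  then have "lower_somewhere x' y' \<longleftrightarrow> lower_somewhere x y"
    "lower_somewhere y' x' \<longleftrightarrow> lower_somewhere y x"
    using lower_somewhere_iff_lex_less len xy perp_sym unfolding same_relations_def by metis+
  then show ?thesis
    using xy \<open>lex_less x' y' \<longleftrightarrow> lex_less x y\<close> lex_less_snoc[OF len(1)] lex_less_snoc[OF len(2)]
      prec_snoc[OF len(1)] prec_snoc[OF len(2)] perp_snoc[OF len(1)] perp_snoc[OF len(2)]
    unfolding same_relations_def lex_le_iff_less_or_eq by auto
qed

lemma nths_snoc: "nths (z @ [c]) I = nths z I @ (if length z \<in> I then [c] else [])"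
  by (simp add: nths_append)

lemma take_nths_eq_nths_take:
  "n \<le> length (nths s I) \<Longrightarrow> \<exists>m\<le>length s. take n (nths s I) = nths (take m s) I"
proof (induction s arbitrary: n rule: rev_induct)
  case (snoc a s)
  show ?case
  proof (cases "n \<le> length (nths s I)")
    case True
    then obtain m where "m \<le> length s" "take n (nths s I) = nths (take m s) I"
      using snoc.IH by blast
    then show ?thesis using True by (intro exI[of _ m]) (simp add: nths_snoc)
  next
    case False
    then have "n = length (nths (s @ [a]) I)"
      using snoc.prems by (auto simp: nths_snoc split: if_splits)
    then show ?thesis by (intro exI[of _ "length (s @ [a])"]) simp
  qed
qed simp

lemma closure_image_nths: "closure ((\<lambda>w. nths w I) ` A) = (\<lambda>w. nths w I) ` closure A"
proof
  show "closure ((\<lambda>w. nths w I) ` A) \<subseteq> (\<lambda>w. nths w I) ` closure A"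
  proof
    fix y assume "y \<in> closure ((\<lambda>w. nths w I) ` A)"
    then obtain s n where s: "s \<in> A" "n \<le> length (nths s I)" "y = take n (nths s I)"
      unfolding closure_def by blast
    then obtain m where "m \<le> length s" "y = nths (take m s) I"
      using take_nths_eq_nths_take by blast
    moreover have "take m s \<in> closure A" using s(1) \<open>m \<le> length s\<close> unfolding closure_def by blast
    ultimately show "y \<in> (\<lambda>w. nths w I) ` closure A" by blast
  qed
  show "(\<lambda>w. nths w I) ` closure A \<subseteq> closure ((\<lambda>w. nths w I) ` A)"
  proof
    fix y assume "y \<in> (\<lambda>w. nths w I) ` closure A"
    then obtain s m where s: "s \<in> A" "m \<le> length s" "y = nths (take m s) I"
      unfolding closure_def by blast
    have "nths s I = y @ nths (drop m s) {j. j + length (take m s) \<in> I}"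
      using nths_append[of "take m s" "drop m s" I] s(3) by simp
    then have "y = take (length y) (nths s I)" "length y \<le> length (nths s I)" by simp_all
    then show "y \<in> closure ((\<lambda>w. nths w I) ` A)" unfolding closure_def using s(1) by blast
  qed
qed


section \<open>Poset-types up to neutral steps\<close>

locale poset_type_with_neutral_steps =
  fixes C :: "word set"
  assumes closed: "closure C = C"
    and step: "\<And>j. level C (Suc j) = {} \<or> leaf_step C j \<or> branch_step C j \<or> perp_step C j \<or>
      prec_step C j \<or> neutral_step C j"
begin

lemma not_interesting_extend_by:
  assumes "j \<notin> interesting C"
  obtains c where "level C (Suc j) = extend_by c (level C j)"
proof -
  have "isomorphic_level (level C j) (level C (Suc j))"
    using assms unfolding interesting_def closed by blast
  then have card: "card (level C (Suc j)) = card (level C j)"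
    unfolding isomorphic_level_def by (metis bij_betw_same_card)
  have fin: "finite (level C j)" by (rule finite_level[OF closed])
  consider "level C (Suc j) = {}" | "leaf_step C j" | "branch_step C j" | "perp_step C j"
    | "prec_step C j" | "neutral_step C j"
    using step by blast
  then show ?thesis
  proof cases
    case 1
    then have "level C j = {}" using card fin by simp
    then show ?thesis using 1 by (intro that[of "\<lambda>_. X"]) simp
  next
    case 2
    then show ?thesis using leaf_step_card[OF fin] card by simp
  next
    case 3
    then show ?thesis using branch_step_card[OF fin] card by simp
  next
    case 4
    then show ?thesis using that unfolding perp_step_iff by blast
  next
    case 5
    then show ?thesis using that unfolding prec_step_iff by blast
  next
    case 6
    then show ?thesis using that unfolding neutral_step_def by blast
  qed
qed

lemma not_interesting_preserves_relations:
  assumes "j \<notin> interesting C" and eq: "level C (Suc j) = extend_by c (level C j)"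
  shows "preserves_relations (level C j) (\<lambda>z. z @ [c z])"
proof -
  obtain F where F: "bij_betw F (level C j) (level C (Suc j))"
    and rel: "\<forall>x\<in>level C j. \<forall>y\<in>level C j. (lex_le x y \<longleftrightarrow> lex_le (F x) (F y)) \<and>
      (preceq x y \<longleftrightarrow> preceq (F x) (F y)) \<and> (perp x y \<longleftrightarrow> perp (F x) (F y))"
    using assms(1) unfolding interesting_def closed isomorphic_level_def by blast
  have take_snoc: "take j (z @ [c z]) = z" if "z \<in> level C j" for z
    using that by (simp add: level_def)
  have "bij_betw (take j) (level C (Suc j)) (level C j)"
    by (rule bij_betw_byWitness[where f' = "\<lambda>z. z @ [c z]"]) (use take_snoc in \<open>auto simp: eq\<close>)
  then have bij: "bij_betw (take j \<circ> F) (level C j) (level C j)"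
    using bij_betw_trans[OF F] by blast
  have mono: "lex_le ((take j \<circ> F) x) ((take j \<circ> F) y)"
    if x: "x \<in> level C j" and y: "y \<in> level C j" and xy: "lex_le x y" for x y
  proof -
    obtain x' y' where "x' \<in> level C j" "y' \<in> level C j" "F x = x' @ [c x']" "F y = y' @ [c y']"
      using bij_betw_apply[OF F x] bij_betw_apply[OF F y] unfolding eq by blast
    moreover have "lex_le (F x) (F y)" using rel x y xy by blast
    ultimately show ?thesis
      using lex_le_snocD[of x' y'] by (simp add: level_def)
  qed
  have F_eq: "F z = z @ [c z]" if z: "z \<in> level C j" for z
  proof -
    obtain z' where z': "z' \<in> level C j" "F z = z' @ [c z']"
      using bij_betw_apply[OF F z] unfolding eq by blast
    have "take j (F z) = z"
      using lex_monotone_bij_id[OF finite_level[OF closed] bij mono z] by simp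
    then show ?thesis using z' take_snoc by simp
  qed
  show ?thesis
    unfolding preserves_relations_def
  proof (intro ballI)
    fix x y assume x: "x \<in> level C j" and y: "y \<in> level C j"
    then show "same_relations x y (x @ [c x]) (y @ [c y])"
      using rel[rule_format, OF x y] F_eq[OF x] F_eq[OF y]
      unfolding same_relations_def preceq_def by auto
  qed
qed

lemma tau_map_snoc:
  "tau_map C (z @ [c]) = tau_map C z @ (if length z \<in> interesting C then [c] else [])"
  by (simp add: tau_map_def nths_snoc)

lemma tau_map_preserves_relations: "preserves_relations (level C m) (tau_map C)"
proof (induction m)
  case 0
  show ?case
    unfolding preserves_relations_def
  proof (intro ballI)
    fix x y assume "x \<in> level C 0" "y \<in> level C 0"
    then have "x = []" "y = []" by (simp_all add: level_def)
    then show "same_relations x y (tau_map C x) (tau_map C y)"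
      by (simp add: same_relations_def tau_map_def)
  qed
next
  case (Suc m)
  show ?case
    unfolding preserves_relations_def
  proof (intro ballI)
    fix x y assume x: "x \<in> level C (Suc m)" and y: "y \<in> level C (Suc m)"
    obtain x0 a where x0: "x = x0 @ [a]" "x0 \<in> level C m" using level_Suc_snoc[OF closed x] .
    obtain y0 b where y0: "y = y0 @ [b]" "y0 \<in> level C m" using level_Suc_snoc[OF closed y] .
    have IH: "same_relations x0 y0 (tau_map C x0) (tau_map C y0)"
      "same_relations y0 x0 (tau_map C y0) (tau_map C x0)"
      using Suc.IH x0 y0 unfolding preserves_relations_def by auto
    have len: "length x0 = m" "length y0 = m" using x0 y0 by (auto simp: level_def)
    show "same_relations x y (tau_map C x) (tau_map C y)"
    proof (cases "m \<in> interesting C")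
      case True
      have "length (tau_map C x0) = length (tau_map C y0)"
        using len by (simp add: tau_map_def length_nths)
      then show ?thesis
        using same_relations_snoc[OF _ _ IH] x0 y0 len True by (simp add: tau_map_snoc)
    next
      case False
      obtain c where eq: "level C (Suc m) = extend_by c (level C m)"
        using not_interesting_extend_by[OF False] .
      have "a = c x0" "b = c y0"
        using x y x0 y0 len unfolding eq by (auto simp: level_def)
      then have "same_relations x0 y0 x y"
        using not_interesting_preserves_relations[OF False eq] x0 y0
        unfolding preserves_relations_def by simp
      then show ?thesis
        using IH(1) x0 y0 len False unfolding same_relations_def by (simp add: tau_map_snoc)
    qed
  qed
qed

definition num_interesting :: "nat \<Rightarrow> nat" where
  "num_interesting j = card {i. i < j \<and> i \<in> interesting C}"

lemma length_tau_map: "length (tau_map C w) = num_interesting (length w)"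
  unfolding tau_map_def num_interesting_def by (simp add: length_nths)

lemma num_interesting_Suc:
  "num_interesting (Suc j) = num_interesting j + (if j \<in> interesting C then 1 else 0)"
proof -
  have "{i. i < Suc j \<and> i \<in> interesting C} =
      {i. i < j \<and> i \<in> interesting C} \<union> (if j \<in> interesting C then {j} else {})"
    by (auto simp: less_Suc_eq)
  then show ?thesis unfolding num_interesting_def by simp
qed

lemma num_interesting_mono: "a \<le> b \<Longrightarrow> num_interesting a \<le> num_interesting b"
  unfolding num_interesting_def by (rule card_mono) auto

lemma not_interesting_between:
  assumes "num_interesting a = num_interesting b" "a \<le> j" "j < b"
  shows "j \<notin> interesting C"
proof
  assume "j \<in> interesting C"
  then have "num_interesting a < num_interesting (Suc j)"
    using num_interesting_mono[of a j] assms(2) num_interesting_Suc[of j] by simp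
  also have "\<dots> \<le> num_interesting b" using assms(3) by (intro num_interesting_mono) simp
  finally show False using assms(1) by simp
qed

lemma interesting_index:
  assumes "k < num_interesting n"
  obtains i where "i < n" "i \<in> interesting C" "num_interesting i = k"
  using assms
proof (induction n)
  case (Suc n)
  show ?case
  proof (cases "k < num_interesting n")
    case True
    then show ?thesis using Suc.IH Suc.prems(1) less_SucI by blast
  next
    case False
    then have "k = num_interesting n" "n \<in> interesting C"
      using Suc.prems(2) num_interesting_Suc[of n] by (auto split: if_splits)
    then show ?thesis using Suc.prems(1) by blast
  qed
qed (simp add: num_interesting_def)

lemma tau_map_take:
  assumes "num_interesting n = num_interesting (length x)" "n \<le> length x"
  shows "tau_map C (take n x) = tau_map C x"
proof -
  have "{j. j < length (drop n x) \<and> j \<in> {j. j + n \<in> interesting C}} = {}"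
    using not_interesting_between[OF assms(1)] assms(2) by auto
  then have "nths (drop n x) {j. j + n \<in> interesting C} = []"
    using length_nths[of "drop n x"] by (metis card.empty length_0_conv)
  then show ?thesis
    using nths_append[of "take n x" "drop n x" "interesting C"] assms(2)
    by (simp add: tau_map_def min_def)
qed

lemma tau_map_extend_to_level:
  assumes "x \<in> level C a" "num_interesting a = num_interesting b" "a \<le> b"
  shows "\<exists>x'\<in>level C b. tau_map C x' = tau_map C x"
  using assms
proof (induction b)
  case (Suc b)
  show ?case
  proof (cases "a = Suc b")
    case False
    then have ab: "a \<le> b" using Suc.prems(3) by simp
    have "num_interesting a = num_interesting b"
      using num_interesting_mono[OF ab] num_interesting_mono[of b "Suc b"] Suc.prems(2) by simp
    then obtain x' where x': "x' \<in> level C b" "tau_map C x' = tau_map C x"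
      using Suc.IH[OF Suc.prems(1) _ ab] by blast
    have b: "b \<notin> interesting C"
      using not_interesting_between[OF Suc.prems(2) ab] by simp
    obtain c where "level C (Suc b) = extend_by c (level C b)"
      using not_interesting_extend_by[OF b] .
    then have "x' @ [c x'] \<in> level C (Suc b)" using x' by simp
    moreover have "tau_map C (x' @ [c x']) = tau_map C x'"
      using b x' by (simp add: tau_map_snoc level_def)
    ultimately show ?thesis using x' by metis
  qed (use Suc.prems in auto)
qed blast

lemma level_tau_image:
  assumes "i \<in> interesting C"
  shows "level (tau_map C ` C) (num_interesting i) = tau_map C ` level C i"
proof
  show "tau_map C ` level C i \<subseteq> level (tau_map C ` C) (num_interesting i)"
    by (auto simp: level_def length_tau_map)
  show "level (tau_map C ` C) (num_interesting i) \<subseteq> tau_map C ` level C i"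
  proof
    fix y assume "y \<in> level (tau_map C ` C) (num_interesting i)"
    then obtain x where x: "x \<in> C" "y = tau_map C x"
      "num_interesting (length x) = num_interesting i"
      by (auto simp: level_def length_tau_map)
    have "length x \<le> i"
    proof (rule ccontr)
      assume "\<not> length x \<le> i"
      then have "num_interesting (Suc i) \<le> num_interesting (length x)"
        by (intro num_interesting_mono) simp
      then show False using num_interesting_Suc[of i] assms x(3) by simp
    qed
    then obtain x' where "x' \<in> level C i" "tau_map C x' = y"
      using tau_map_extend_to_level[of x "length x" i] x by (auto simp: level_def)
    then show "y \<in> tau_map C ` level C i" by blast
  qed
qed

lemma level_Suc_tau_image:
  assumes "i \<in> interesting C"
  shows "level (tau_map C ` C) (Suc (num_interesting i)) = tau_map C ` level C (Suc i)"
proof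
  have Suc: "num_interesting (Suc i) = Suc (num_interesting i)"
    using num_interesting_Suc[of i] assms by simp
  then show "tau_map C ` level C (Suc i) \<subseteq> level (tau_map C ` C) (Suc (num_interesting i))"
    by (auto simp: level_def length_tau_map)
  show "level (tau_map C ` C) (Suc (num_interesting i)) \<subseteq> tau_map C ` level C (Suc i)"
  proof
    fix y assume "y \<in> level (tau_map C ` C) (Suc (num_interesting i))"
    then obtain x where x: "x \<in> C" "y = tau_map C x"
      "num_interesting (length x) = Suc (num_interesting i)"
      by (auto simp: level_def length_tau_map)
    have le: "Suc i \<le> length x"
    proof (rule ccontr)
      assume "\<not> Suc i \<le> length x"
      then have "num_interesting (length x) \<le> num_interesting i"
        by (intro num_interesting_mono) simp
      then show False using x(3) by simp
    qed
    have "tau_map C (take (Suc i) x) = y"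
      using tau_map_take[OF _ le] Suc x by simp
    moreover have "take (Suc i) x \<in> level C (Suc i)"
      using closure_take[of x C "Suc i"] closed x(1) le by (simp add: level_def)
    ultimately show "y \<in> tau_map C ` level C (Suc i)" by blast
  qed
qed

lemma tau_image_step:
  assumes "\<exists>g\<in>tau_map C ` C. k < length g"
  shows "leaf_step (tau_map C ` C) k \<or> branch_step (tau_map C ` C) k \<or>
    perp_step (tau_map C ` C) k \<or> prec_step (tau_map C ` C) k"
proof -
  obtain x where x: "x \<in> C" "k < length (tau_map C x)" using assms by blast
  then obtain i where i: "i < length x" "i \<in> interesting C" "num_interesting i = k"
    using interesting_index[of k "length x"] by (auto simp: length_tau_map)
  interpret level_map C "tau_map C ` C" i k "tau_map C"
  proof
    show "level (tau_map C ` C) k = tau_map C ` level C i"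
      using level_tau_image[OF i(2)] i(3) by simp
    show "level (tau_map C ` C) (Suc k) = tau_map C ` level C (Suc i)"
      using level_Suc_tau_image[OF i(2)] i(3) by simp
    show "tau_map C (z @ [c]) = tau_map C z @ [c]" if "z \<in> level C i" for z c
      using that i(2) by (simp add: tau_map_snoc level_def)
  qed (rule tau_map_preserves_relations)
  have "take (Suc i) x \<in> level C (Suc i)"
    using closure_take[of x C "Suc i"] closed x(1) i(1) by (simp add: level_def)
  then consider "leaf_step C i" | "branch_step C i" | "perp_step C i" | "prec_step C i"
    | "neutral_step C i"
    using step[of i] by blast
  then show ?thesis
  proof cases
    case 5
    then show ?thesis using neutral_step_not_interesting[OF closed] i(2) by blast
  qed (use leaf_step branch_step perp_step prec_step in blast)+
qed

theorem poset_type_tau_image: "poset_type (tau_map C ` C)"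
proof (rule poset_typeI)
  have "tau_map C = (\<lambda>w. nths w (interesting C))" by (simp add: tau_map_def fun_eq_iff)
  then show "closure (tau_map C ` C) = tau_map C ` C"
    using closure_image_nths[of "interesting C" C] closed by simp
qed (rule tau_image_step)

end


section \<open>The subtree spanned by a set of leaves\<close>

definition children :: "word set \<Rightarrow> word \<Rightarrow> letter set" where
  "children C z = {d. z @ [d] \<in> C}"

lemma children_level:
  "z \<in> level C j \<Longrightarrow> children C z = {d. z @ [d] \<in> level C (Suc j)}"
  by (auto simp: children_def level_def)

lemma level_Suc_children:
  assumes "closure C = C"
  shows "level C (Suc j) = {z @ [d] |z d. z \<in> level C j \<and> d \<in> children C z}"
proof
  show "level C (Suc j) \<subseteq> {z @ [d] |z d. z \<in> level C j \<and> d \<in> children C z}"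
  proof
    fix x assume x: "x \<in> level C (Suc j)"
    then obtain z d where "x = z @ [d]" "z \<in> level C j" by (rule level_Suc_snoc[OF assms])
    then show "x \<in> {z @ [d] |z d. z \<in> level C j \<and> d \<in> children C z}"
      using x by (auto simp: children_level)
  qed
qed (auto simp: children_def level_def)

lemma children_extend_by:
  "level C (Suc j) = extend_by c (level C j) \<Longrightarrow> z \<in> level C j \<Longrightarrow> children C z = {c z}"
  by (auto simp: children_level level_def)

locale leaf_closure =
  fixes S S' :: "word set"
  assumes poset: "poset_type S" and leaves: "S' \<subseteq> leaves S"
begin

abbreviation T :: "word set" where
  "T \<equiv> closure S'"

lemma T_subset: "T \<subseteq> S"
proof -
  have "S' \<subseteq> S" using leaves unfolding leaves_def by auto
  then have "T \<subseteq> closure S" by (rule closure_mono)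
  then show ?thesis using poset unfolding poset_type_def by auto
qed

lemma level_T_subset: "level T j \<subseteq> level S j"
  using T_subset unfolding level_def by auto

lemma word_level_axioms_T: "word_level_axioms (level T j)"
  using level_axioms_subset[OF word_level_axioms_level[OF poset] level_T_subset] .

text \<open>A word of \<open>T\<close> with a child in \<open>S\<close> is not one of the chosen leaves, so it has a child
  in \<open>T\<close> as well.\<close>
lemma children_T:
  assumes "z \<in> T"
  shows "children T z \<subseteq> children S z" and "children S z \<noteq> {} \<Longrightarrow> children T z \<noteq> {}"
proof -
  show "children T z \<subseteq> children S z" using T_subset unfolding children_def by auto
  assume "children S z \<noteq> {}"
  then have "z \<notin> S'" using leaves unfolding children_def leaves_def by blast
  then show "children T z \<noteq> {}" using closure_snoc_child[OF assms] unfolding children_def by auto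
qed

lemma children_T_singleton:
  assumes "z \<in> T" "children S z = {d}"
  shows "children T z = {d}"
  using children_T[OF assms(1)] assms(2) by (auto simp: subset_singleton_iff)

lemma level_T_D: "z \<in> level T j \<Longrightarrow> z \<in> T \<and> z \<in> level S j"
  using level_T_subset by (auto simp: level_def)

lemma level_Suc_T: "level T (Suc j) = {z @ [d] |z d. z \<in> level T j \<and> d \<in> children T z}"
  using level_Suc_children[of T] by simp

lemma extend_by_T:
  assumes "\<And>z. z \<in> level T j \<Longrightarrow> children T z = {c z}"
  shows "level T (Suc j) = extend_by c (level T j)"
  unfolding level_Suc_T using assms by auto

lemma level_Suc_T_branch:
  assumes w: "w \<in> level T j" "children T w = {X, R}"
    and children: "\<And>z. z \<in> level T j \<Longrightarrow> z \<noteq> w \<Longrightarrow> children T z = {branch_letter w z}"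
  shows "level T (Suc j) = insert (w @ [X]) (extend_by (branch_letter w) (level T j))"
proof (intro set_eqI iffI)
  fix x assume "x \<in> level T (Suc j)"
  then obtain z d where "z \<in> level T j" "d \<in> children T z" "x = z @ [d]"
    unfolding level_Suc_T by blast
  then show "x \<in> insert (w @ [X]) (extend_by (branch_letter w) (level T j))"
    using children w by (cases "z = w") (auto simp: branch_letter_def)
next
  fix x assume "x \<in> insert (w @ [X]) (extend_by (branch_letter w) (level T j))"
  then consider "x = w @ [X]" | z where "z \<in> level T j" "x = z @ [branch_letter w z]"
    by auto
  then show "x \<in> level T (Suc j)"
  proof cases
    case 1
    then show ?thesis unfolding level_Suc_T using w by blast
  next
    case (2 z)
    then have "branch_letter w z \<in> children T z"
      using children w by (cases "z = w") (auto simp: branch_letter_def)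
    then show ?thesis unfolding level_Suc_T using 2 by blast
  qed
qed

lemma neutral_step_T:
  assumes "\<And>z. z \<in> level T j \<Longrightarrow> children T z = {c z}"
    and "harmless_letters (level T j) lex_less prec perp c"
  shows "neutral_step T j"
  using neutral_stepI[OF word_level_axioms_T assms(2) extend_by_T[OF assms(1)]] .

lemma extend_by_S_T:
  assumes "level S (Suc j) = extend_by c (level S j)"
  shows "level T (Suc j) = extend_by c (level T j)"
proof (rule extend_by_T)
  fix z assume "z \<in> level T j"
  then show "children T z = {c z}"
    using level_T_D children_extend_by[OF assms] children_T_singleton by blast
qed

lemma T_of_leaf_step:
  assumes "leaf_step S j"
  shows "leaf_step T j \<or> neutral_step T j"
proof -
  obtain w where w: "w \<in> level S j" and rel: "\<forall>u\<in>level S j - {w}. related w u"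
    and eq: "level S (Suc j) = app (level S j - {w}) X"
    using assms unfolding leaf_step_def by blast
  have children_S: "children S z = (if z = w then {} else {X})" if "z \<in> level S j" for z
    using that unfolding children_level[OF that] eq app_def by auto
  have children: "children T z = (if z = w then {} else {X})" if "z \<in> level T j" for z
    using level_T_D[OF that] children_S children_T(1)[of z] children_T_singleton[of z] by auto
  show ?thesis
  proof (cases "w \<in> level T j")
    case True
    have "level T (Suc j) = app (level T j - {w}) X"
      unfolding level_Suc_T app_def using children
      by (auto intro!: snoc_in_extend_by split: if_splits)
    moreover have "\<forall>u\<in>level T j - {w}. related w u" using rel level_T_subset by blast
    ultimately show ?thesis unfolding leaf_step_def using True by blast
  next
    case False
    have "neutral_step T j"
      by (rule neutral_step_T[of _ "\<lambda>_. X"])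
        (use children False in \<open>auto intro: harmless_letters_monotone\<close>)
    then show ?thesis ..
  qed
qed

lemma T_of_branch_step:
  assumes "branch_step S j"
  shows "branch_step T j \<or> neutral_step T j"
proof -
  obtain w where w: "w \<in> level S j"
    and eq: "level S (Suc j) = insert (w @ [X]) (extend_by (branch_letter w) (level S j))"
    using assms unfolding branch_step_iff by blast
  have children_S: "children S z = (if z = w then {X, R} else {branch_letter w z})"
    if "z \<in> level S j" for z
    using that unfolding children_level[OF that] eq by (auto simp: branch_letter_def)
  have children: "children T z = {branch_letter w z}" if "z \<in> level T j" "z \<noteq> w" for z
    using level_T_D[OF that(1)] children_S children_T_singleton that(2) by auto
  have children_w: "children T w \<subseteq> {X, R}" "children T w \<noteq> {}" if "w \<in> level T j"
    using level_T_D[OF that] children_S children_T[of w] by auto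
  show ?thesis
  proof (cases "w \<in> level T j \<and> children T w = {X, R}")
    case True
    then have "level T (Suc j) = insert (w @ [X]) (extend_by (branch_letter w) (level T j))"
      using level_Suc_T_branch children by blast
    then show ?thesis unfolding branch_step_iff using True by blast
  next
    case False
    define c where "c z = (if z = w \<and> children T w = {X} then X else branch_letter w z)" for z
    have "children T z = {c z}" if "z \<in> level T j" for z
    proof (cases "z = w")
      case True
      have "children T w \<subseteq> {X, R}" "children T w \<noteq> {}" "children T w \<noteq> {X, R}"
        using children_w that False True by auto
      then show ?thesis
        using True unfolding c_def branch_letter_def
        by (cases "X \<in> children T w"; cases "R \<in> children T w") auto
    qed (use that children in \<open>simp add: c_def\<close>)
    moreover have "harmless_letters (level T j) lex_less prec perp c"
    proof (rule harmless_letters_monotone)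
      show "c x \<noteq> L" for x unfolding c_def using branch_letter_not_L by simp
      show "c x = X" if "lex_less x y" "c y = X" for x y
        using that lex_less_trans[of x y w] lex_less_asym[of x w]
        unfolding c_def branch_letter_def by (auto split: if_splits)
    qed
    ultimately show ?thesis using neutral_step_T by blast
  qed
qed

lemma T_of_perp_step:
  assumes "perp_step S j"
  shows "perp_step T j \<or> neutral_step T j"
proof -
  obtain v w where vw: "v \<in> level S j" "w \<in> level S j" "unrelated v w" "lex_less v w"
    and eq: "level S (Suc j) = extend_by (new_perp_letter lex_less perp v w) (level S j)"
    and between: "\<forall>u\<in>level S j. lex_less v u \<and> lex_less u w \<longrightarrow> perp u v \<or> perp u w"
    using assms unfolding perp_step_iff by blast
  have eq_T: "level T (Suc j) = extend_by (new_perp_letter lex_less perp v w) (level T j)"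
    using extend_by_S_T[OF eq] .
  show ?thesis
  proof (cases "v \<in> level T j \<and> w \<in> level T j")
    case True
    then show ?thesis
      unfolding perp_step_iff using vw eq_T between level_T_subset by blast
  next
    case False
    interpret new_perp_pair "level S j" lex_less prec perp v w
      using new_perp_pairI[OF word_level_axioms_level[OF poset] vw between] .
    show ?thesis
      using neutral_stepI[OF word_level_axioms_T
          harmless_new_perp_letter[OF level_T_subset False] eq_T]
      by blast
  qed
qed

lemma T_of_prec_step:
  assumes "prec_step S j"
  shows "prec_step T j \<or> neutral_step T j"
proof -
  obtain v w where vw: "v \<in> level S j" "w \<in> level S j" "unrelated v w" "lex_less v w"
    and eq: "level S (Suc j) = extend_by (new_prec_letter lex_less perp v w) (level S j)"
    and below: "\<forall>u\<in>level S j. lex_less u v \<longrightarrow> preceq u w \<or> perp u v"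
    and above: "\<forall>u\<in>level S j. lex_less w u \<longrightarrow> preceq v u \<or> perp w u"
    using assms unfolding prec_step_iff by blast
  have eq_T: "level T (Suc j) = extend_by (new_prec_letter lex_less perp v w) (level T j)"
    using extend_by_S_T[OF eq] .
  show ?thesis
  proof (cases "v \<in> level T j \<and> w \<in> level T j")
    case True
    then show ?thesis
      unfolding prec_step_iff using vw eq_T below above level_T_subset by blast
  next
    case False
    interpret new_prec_pair "level S j" lex_less prec perp v w
      using new_prec_pairI[OF word_level_axioms_level[OF poset] vw below above] .
    show ?thesis
      using neutral_stepI[OF word_level_axioms_T
          harmless_new_prec_letter[OF level_T_subset False] eq_T]
      by blast
  qed
qed

sublocale poset_type_with_neutral_steps T
proof
  show "closure T = T" by simp
  fix j
  show "level T (Suc j) = {} \<or> leaf_step T j \<or> branch_step T j \<or> perp_step T j \<or>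
      prec_step T j \<or> neutral_step T j"
  proof (cases "\<exists>w\<in>S. j < length w")
    case True
    then show ?thesis
      using poset_type_step[OF poset True] T_of_leaf_step T_of_branch_step T_of_perp_step
        T_of_prec_step by blast
  next
    case False
    then have "level S (Suc j) = {}" unfolding level_def by auto
    then show ?thesis using level_T_subset[of "Suc j"] by blast
  qed
qed

end

theorem mainTheorem3:
  assumes "poset_type S" and "S' \<subseteq> leaves S"
  shows "tau (closure S') = closure (tau S') \<and> poset_type (closure (tau S'))"
proof -
  interpret leaf_closure S S' using assms by unfold_locales
  have "tau_map S' = tau_map T"
    by (simp add: tau_map_def interesting_def fun_eq_iff)
  then have "closure (tau S') = tau T"
    unfolding tau_def using closure_image_nths[of "interesting T" S'] by (simp add: tau_map_def)
  then show ?thesis using poset_type_tau_image by (simp add: tau_def)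
qed

end
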